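(* Let $G=(V,E)$ be an undirected graph (finite or infinite) and $M=M(S)$ a multiplex of $G$ generated by the simplex $S=(V_S,E_S)$. Then: (i) $G(\widetilde M)$ has a partition $F_M\neq\{\widetilde M\}$ of $\widetilde M$ into maximal ``strong'' partitive sets of $G(\widetilde M)$; (ii) if $\mathrm{rank}(M)=1$, then either $G(\widetilde M)/F_M$ is isomorphic to $S$, or $G(\widetilde M)/F_M$ is indecomposable and isomorphic to a sub-graph $G'=(V',E')$ of $G(\widetilde M)$ with $E'\subseteq M$; (iii) if $\mathrm{rank}(M)\ge 2$, then $G(\widetilde M)/F_M$ is isomorphic to $S$.
   Context: A graph $G=(V,E)$ has vertex set $V$ (possibly infinite) and edge set $E\subseteq V^2$ of ordered pairs; it is undirected if $E$ is irreflexive and symmetric, and then $ab$ denotes $\{(a,b),(b,a)\}$, with $ab\in E$ meaning $(a,b)\in E$. For $X\subseteq V$, $E(X)=\{(a,b)\in E: a,b\in X\}$ and $G(X)=(X,E(X))$. For a set $A$ of ordered pairs, $\widetilde A$ is the set of vertices $a$ such that $(a,b)\in A$ or $(b,a)\in A$ for some $b$. A set $X\subseteq W$ is a partitive set of a graph $H=(W,D)$ if for all $a,b\in X$ and $c\in W\setminus X$: $(a,c)\in D\Leftrightarrow(b,c)\in D$ and $(c,a)\in D\Leftrightarrow(c,b)\in D$; $I(H)$ is the class of partitive sets; a partitive set is trivial if it is a singleton or $W$; $H$ is indecomposable if all its partitive sets are trivial. A ``strong'' partitive set of $H$ is an $X\in I(H)$ such that for every $Y\in I(H)$ with $X\cap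 Y\neq\emptyset$, $X\subseteq Y$ or $Y\subseteq X$; $I_F(H)$ is the class of these. A maximal ``strong'' partitive set of $H$ is an element of $I_F(H)\setminus\{W\}$ maximal for inclusion in $I_F(H)\setminus\{W\}$. For a partition $P$ of $W$ into partitive sets, the quotient $H/P$ is the graph with vertex set $P$ in which distinct $X,Y$ are joined iff $(x,y)\in D$ for some, equivalently every, $x\in X,y\in Y$ (isomorphic to $H(f(P))$ for any choice function $f$ with $f(X)\in X$). Implication classes of undirected $G$: on $E$ define $(a,b)\Gamma(a',b')$ iff either $a=a'$ and $(b,b')\notin E$, or $b=b'$ and $(a,a')\notin E$; the classes of the transitive closure $\Gamma^*$ are the implication classes. For an implication class $A$, $A^{-1}=\{(b,a):(a,b)\in A\}$ and the color class (color) is $\widehat A=A\cup A^{-1}$. A simplex of rank $r\ge1$ is a complete sub-graph $S=(V_S,E_S)$ of $G$ on $r+1$ vertices whose distinct undirected edges lie in distinct color classes. The multiplex generated by $S$ is $M(S)=\bigcup\{\widehat A:\widehat A\text{ a color class},\ \widehat A\cap E_S\neq\emptyset\}$, of rank $r$; $\widetilde M$ is the set of vertices spanned by $M$. *)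

theory Defs
  imports Main "HOL-Library.Disjoint_Sets"
begin

definition undirected :: "'a set \<Rightarrow> ('a \<times> 'a) set \<Rightarrow> bool" where
  "undirected V E \<longleftrightarrow> E \<subseteq> V \<times> V \<and> irrefl E \<and> sym E"

text \<open>E(X): the edges of E with both ends in X (so G(X) = (X, induced_edges E X)).\<close>
definition induced_edges :: "('a \<times> 'a) set \<Rightarrow> 'a set \<Rightarrow> ('a \<times> 'a) set" where
  "induced_edges E X = {(a, b). (a, b) \<in> E \<and> a \<in> X \<and> b \<in> X}"

definition Gamma :: "('a \<times> 'a) set \<Rightarrow> (('a \<times> 'a) \<times> ('a \<times> 'a)) set" where
  "Gamma E = {((a, b), (a', b')). (a, b) \<in> E \<and> (a', b') \<in> E \<and>
      ((a = a' \<and> (b, b') \<notin> E) \<or> (b = b' \<and> (a, a') \<notin> E))}"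

definition implication_classes :: "('a \<times> 'a) set \<Rightarrow> ('a \<times> 'a) set set" where
  "implication_classes E = E // ((Gamma E)\<^sup>+)"

definition color_classes :: "('a \<times> 'a) set \<Rightarrow> ('a \<times> 'a) set set" where
  "color_classes E = {A \<union> A\<inverse> | A. A \<in> implication_classes E}"

text \<open>A simplex, given by its vertex set VS (its edge set is induced_edges E VS);
  its rank is card VS - 1.\<close>
definition simplex :: "'a set \<Rightarrow> ('a \<times> 'a) set \<Rightarrow> 'a set \<Rightarrow> bool" where
  "simplex V E VS \<longleftrightarrow> VS \<subseteq> V \<and> finite VS \<and> card VS \<ge> 2 \<and>
     (\<forall>a\<in>VS. \<forall>b\<in>VS. a \<noteq> b \<longrightarrow> (a, b) \<in> E) \<and>
     (\<forall>a\<in>VS. \<forall>b\<in>VS. \<forall>c\<in>VS. \<forall>d\<in>VS.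
        a \<noteq> b \<longrightarrow> c \<noteq> d \<longrightarrow> {a, b} \<noteq> {c, d} \<longrightarrow>
        (\<forall>C\<in>color_classes E. (a, b) \<in> C \<longrightarrow> (c, d) \<notin> C))"

definition simplex_rank :: "'a set \<Rightarrow> nat" where
  "simplex_rank VS = card VS - 1"

definition multiplex :: "('a \<times> 'a) set \<Rightarrow> 'a set \<Rightarrow> ('a \<times> 'a) set" where
  "multiplex E VS = \<Union>{C \<in> color_classes E. C \<inter> induced_edges E VS \<noteq> {}}"

definition partitive :: "'b set \<Rightarrow> ('b \<times> 'b) set \<Rightarrow> 'b set \<Rightarrow> bool" where
  "partitive W D X \<longleftrightarrow> X \<subseteq> W \<and>
     (\<forall>a\<in>X. \<forall>b\<in>X. \<forall>c\<in>W - X.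
        ((a, c) \<in> D \<longleftrightarrow> (b, c) \<in> D) \<and> ((c, a) \<in> D \<longleftrightarrow> (c, b) \<in> D))"

definition strong_partitive :: "'b set \<Rightarrow> ('b \<times> 'b) set \<Rightarrow> 'b set \<Rightarrow> bool" where
  "strong_partitive W D X \<longleftrightarrow> partitive W D X \<and>
     (\<forall>Y. partitive W D Y \<and> X \<inter> Y \<noteq> {} \<longrightarrow> X \<subseteq> Y \<or> Y \<subseteq> X)"

definition max_strong_partitive :: "'b set \<Rightarrow> ('b \<times> 'b) set \<Rightarrow> 'b set \<Rightarrow> bool" where
  "max_strong_partitive W D X \<longleftrightarrow> strong_partitive W D X \<and> X \<noteq> W \<and>
     (\<forall>Y. strong_partitive W D Y \<and> Y \<noteq> W \<and> X \<subseteq> Y \<longrightarrow> Y = X)"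

definition indecomposable :: "'b set \<Rightarrow> ('b \<times> 'b) set \<Rightarrow> bool" where
  "indecomposable W D \<longleftrightarrow>
     (\<forall>X. partitive W D X \<longrightarrow> X = {} \<or> (\<exists>x. X = {x}) \<or> X = W)"

definition quotient_edges :: "('b \<times> 'b) set \<Rightarrow> 'b set set \<Rightarrow> ('b set \<times> 'b set) set" where
  "quotient_edges D P = {(X, Y). X \<in> P \<and> Y \<in> P \<and> X \<noteq> Y \<and> (\<exists>x\<in>X. \<exists>y\<in>Y. (x, y) \<in> D)}"

definition graph_iso :: "'b set \<Rightarrow> ('b \<times> 'b) set \<Rightarrow> 'c set \<Rightarrow> ('c \<times> 'c) set \<Rightarrow> bool" where
  "graph_iso V1 E1 V2 E2 \<longleftrightarrow> (\<exists>f. bij_betw f V1 V2 \<and>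
     (\<forall>a\<in>V1. \<forall>b\<in>V1. (a, b) \<in> E1 \<longleftrightarrow> (f a, f b) \<in> E2))"

end

theory Submission
  imports Defs
begin

text \<open>
  The multiplex \<open>M\<close> is the set of edges forced (via \<open>\<Gamma>\<^sup>+\<close>) by edges of the simplex, and a
  partitive set of \<open>G(Mt)\<close> containing both ends of an edge of \<open>M\<close> contains both ends of every
  edge that edge forces.

  For rank at least 2, every simplex vertex \<open>v\<close> determines the class of vertices \<open>x\<close> for which
  \<open>vw\<close> forces \<open>xw\<close> for all other simplex vertices \<open>w\<close>. Since distinct simplex edges do not
  force each other, these classes partition \<open>Mt\<close>, any two of them are completely joined by
  edges forced by the corresponding simplex edge, and they are exactly the maximal strong
  partitive sets; so the quotient is the simplex.

  For rank 1, \<open>M\<close> is a single color class, so \<open>G(Mt)\<close> is connected. If its complement is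
  disconnected, the co-components of the two simplex vertices form the partition. Otherwise
  Gallai's argument applies: the maximal proper partitive sets are strong, partition \<open>Mt\<close> and
  have an indecomposable quotient, and every edge between two of them lies in \<open>M\<close>, so any choice
  of representatives realises the quotient inside \<open>M\<close>.
\<close>

section \<open>Implication classes\<close>

locale simple_graph =
  fixes E :: "('a \<times> 'a) set"
  assumes sym_E: "sym E" and irrefl_E: "irrefl E"
begin

abbreviation \<Gamma> :: "(('a \<times> 'a) \<times> ('a \<times> 'a)) set" where "\<Gamma> \<equiv> Gamma E"

lemma edge_sym: "(x, y) \<in> E \<Longrightarrow> (y, x) \<in> E"
  using sym_E by (auto simp: sym_def)

lemma no_loop: "(x, x) \<notin> E"
  using irrefl_E by (auto simp: irrefl_def)

lemma induced_edges_sym: "(x, y) \<in> induced_edges E X \<Longrightarrow> (y, x) \<in> induced_edges E X"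
  unfolding induced_edges_def using edge_sym by blast

lemma sym_induced_edges: "sym (induced_edges E X)"
  using induced_edges_sym by (auto intro: symI)

lemma Gamma_edges: "(e, e') \<in> \<Gamma> \<Longrightarrow> e \<in> E \<and> e' \<in> E"
  by (auto simp: Gamma_def)

lemma GammaI_fst:
  "(a, b) \<in> E \<Longrightarrow> (a, b') \<in> E \<Longrightarrow> (b, b') \<notin> E \<Longrightarrow> ((a, b), (a, b')) \<in> \<Gamma>"
  by (auto simp: Gamma_def)

lemma GammaI_snd:
  "(a, b) \<in> E \<Longrightarrow> (a', b) \<in> E \<Longrightarrow> (a, a') \<notin> E \<Longrightarrow> ((a, b), (a', b)) \<in> \<Gamma>"
  by (auto simp: Gamma_def)

lemma Gamma_sym: "(e, e') \<in> \<Gamma> \<Longrightarrow> (e', e) \<in> \<Gamma>"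
  by (auto simp: Gamma_def dest: edge_sym)

lemma Gamma_swap: "(e, e') \<in> \<Gamma> \<Longrightarrow> (prod.swap e, prod.swap e') \<in> \<Gamma>"
  by (auto simp: Gamma_def dest: edge_sym)

lemma Gamma_trancl_edges: "(e, e') \<in> \<Gamma>\<^sup>+ \<Longrightarrow> e \<in> E \<and> e' \<in> E"
  by (induction rule: trancl_induct) (auto dest: Gamma_edges)

lemma Gamma_trancl_refl: "e \<in> E \<Longrightarrow> (e, e) \<in> \<Gamma>\<^sup>+"
  using no_loop by (cases e) (auto simp: Gamma_def)

lemma Gamma_trancl_sym: "(e, e') \<in> \<Gamma>\<^sup>+ \<Longrightarrow> (e', e) \<in> \<Gamma>\<^sup>+"
  using Gamma_sym by (metis sym_def sym_trancl)

lemma Gamma_trancl_swap: "((a, b), (c, d)) \<in> \<Gamma>\<^sup>+ \<Longrightarrow> ((b, a), (d, c)) \<in> \<Gamma>\<^sup>+"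
proof -
  have "(prod.swap e, prod.swap e') \<in> \<Gamma>\<^sup>+" if "(e, e') \<in> \<Gamma>\<^sup>+" for e e'
    using that by (induction rule: trancl_induct) (auto intro: trancl_into_trancl dest: Gamma_swap)
  from this[of "(a, b)" "(c, d)"] show "((a, b), (c, d)) \<in> \<Gamma>\<^sup>+ \<Longrightarrow> ((b, a), (d, c)) \<in> \<Gamma>\<^sup>+"
    by simp
qed

lemma Gamma_trancl_induct [consumes 1, case_names base step_fst step_snd]:
  assumes "(e, e') \<in> \<Gamma>\<^sup>+" and "P e"
    and step_fst: "\<And>a b b'. (e, (a, b)) \<in> \<Gamma>\<^sup>+ \<Longrightarrow> (e, (a, b')) \<in> \<Gamma>\<^sup>+ \<Longrightarrow>
      (a, b) \<in> E \<Longrightarrow> (a, b') \<in> E \<Longrightarrow> (b, b') \<notin> E \<Longrightarrow> P (a, b) \<Longrightarrow> P (a, b')"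
    and step_snd: "\<And>a a' b. (e, (a, b)) \<in> \<Gamma>\<^sup>+ \<Longrightarrow> (e, (a', b)) \<in> \<Gamma>\<^sup>+ \<Longrightarrow>
      (a, b) \<in> E \<Longrightarrow> (a', b) \<in> E \<Longrightarrow> (a, a') \<notin> E \<Longrightarrow> P (a, b) \<Longrightarrow> P (a', b)"
  shows "P e'"
proof -
  have "(e, e') \<in> \<Gamma>\<^sup>*" and "e \<in> E"
    using assms(1) Gamma_trancl_edges by auto
  then show ?thesis
  proof (induction rule: rtrancl_induct)
    case base
    from assms(2) show ?case .
  next
    case (step f f')
    obtain a b where f: "f = (a, b)"
      by (cases f)
    have ab: "(e, (a, b)) \<in> \<Gamma>\<^sup>+"
      using step.hyps(1) step.prems Gamma_trancl_refl unfolding f by (metis rtrancl_eq_or_trancl)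
    have "P (a, b)"
      using step.IH step.prems unfolding f .
    have "(e, f') \<in> \<Gamma>\<^sup>+"
      using ab step.hyps(2) unfolding f by (rule trancl_into_trancl)
    consider b' where "f' = (a, b')" "(a, b) \<in> E" "(a, b') \<in> E" "(b, b') \<notin> E"
      | a' where "f' = (a', b)" "(a, b) \<in> E" "(a', b) \<in> E" "(a, a') \<notin> E"
      using step.hyps(2) unfolding f Gamma_def by auto
    then show ?case
    proof cases
      case (1 b')
      then show ?thesis
        using step_fst[OF ab] \<open>(e, f') \<in> \<Gamma>\<^sup>+\<close> \<open>P (a, b)\<close> by simp
    next
      case (2 a')
      then show ?thesis
        using step_snd[OF ab] \<open>(e, f') \<in> \<Gamma>\<^sup>+\<close> \<open>P (a, b)\<close> by simp
    qed
  qed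
qed

lemma same_color_iff:
  "(\<exists>C\<in>color_classes E. (a, b) \<in> C \<and> (c, d) \<in> C) \<longleftrightarrow>
     ((a, b), (c, d)) \<in> \<Gamma>\<^sup>+ \<or> ((a, b), (d, c)) \<in> \<Gamma>\<^sup>+"
proof
  assume "\<exists>C\<in>color_classes E. (a, b) \<in> C \<and> (c, d) \<in> C"
  then obtain C where "C \<in> color_classes E" and ab: "(a, b) \<in> C" and cd: "(c, d) \<in> C"
    by blast
  then obtain e where C: "C = \<Gamma>\<^sup>+ `` {e} \<union> (\<Gamma>\<^sup>+ `` {e})\<inverse>"
    unfolding color_classes_def implication_classes_def by (auto elim: quotientE)
  have "(e, (a, b)) \<in> \<Gamma>\<^sup>+ \<or> (e, (b, a)) \<in> \<Gamma>\<^sup>+" "(e, (c, d)) \<in> \<Gamma>\<^sup>+ \<or> (e, (d, c)) \<in> \<Gamma>\<^sup>+"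
    using ab cd unfolding C by auto
  moreover have "(f, f') \<in> \<Gamma>\<^sup>+" if "(e, f) \<in> \<Gamma>\<^sup>+" and "(e, f') \<in> \<Gamma>\<^sup>+" for f f'
    using that by (meson Gamma_trancl_sym trancl_trans)
  ultimately show "((a, b), (c, d)) \<in> \<Gamma>\<^sup>+ \<or> ((a, b), (d, c)) \<in> \<Gamma>\<^sup>+"
    using Gamma_trancl_swap[of b a c d] Gamma_trancl_swap[of b a d c] by blast
next
  assume forced: "((a, b), (c, d)) \<in> \<Gamma>\<^sup>+ \<or> ((a, b), (d, c)) \<in> \<Gamma>\<^sup>+"
  define C where "C = \<Gamma>\<^sup>+ `` {(a, b)} \<union> (\<Gamma>\<^sup>+ `` {(a, b)})\<inverse>"
  have "(a, b) \<in> E"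
    using forced Gamma_trancl_edges by blast
  then have "C \<in> color_classes E" and "(a, b) \<in> C"
    unfolding C_def color_classes_def implication_classes_def
    by (auto intro: quotientI Gamma_trancl_refl)
  moreover have "(c, d) \<in> C"
    using forced unfolding C_def by blast
  ultimately show "\<exists>C\<in>color_classes E. (a, b) \<in> C \<and> (c, d) \<in> C"
    by blast
qed

lemma multiplex_eq: "multiplex E VS = \<Gamma>\<^sup>+ `` induced_edges E VS"
proof (intro equalityI subsetI)
  fix e
  assume "e \<in> multiplex E VS"
  then obtain C a b where C: "C \<in> color_classes E" "(a, b) \<in> C" "e \<in> C"
      and ab: "(a, b) \<in> induced_edges E VS"
    unfolding multiplex_def by auto
  moreover obtain c d where e: "e = (c, d)"
    by (cases e)
  ultimately have "((a, b), (c, d)) \<in> \<Gamma>\<^sup>+ \<or> ((b, a), (c, d)) \<in> \<Gamma>\<^sup>+"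
    using same_color_iff[of a b c d] Gamma_trancl_swap[of a b d c] by auto
  moreover have "(b, a) \<in> induced_edges E VS"
    using ab edge_sym by (auto simp: induced_edges_def)
  ultimately show "e \<in> \<Gamma>\<^sup>+ `` induced_edges E VS"
    using ab e by blast
next
  fix e
  assume "e \<in> \<Gamma>\<^sup>+ `` induced_edges E VS"
  then obtain a b where "(a, b) \<in> induced_edges E VS" "((a, b), e) \<in> \<Gamma>\<^sup>+"
    by auto
  then show "e \<in> multiplex E VS"
    using same_color_iff[of a b "fst e" "snd e"] unfolding multiplex_def by auto
qed

lemma simplex_edges_unforced:
  assumes "simplex V E VS" and "u \<in> VS" "v \<in> VS" "u' \<in> VS" "v' \<in> VS" "u \<noteq> v" "u' \<noteq> v'"
    and "((u, v), (u', v')) \<in> \<Gamma>\<^sup>+"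
  shows "{u, v} = {u', v'}"
proof (rule ccontr)
  assume "{u, v} \<noteq> {u', v'}"
  moreover obtain C where "C \<in> color_classes E" "(u, v) \<in> C" "(u', v') \<in> C"
    using same_color_iff assms(8) by blast
  ultimately show False
    using assms(1-7) unfolding simplex_def by blast
qed

text \<open>If a \<open>\<Gamma>\<close>-step from \<open>uv\<close> to \<open>uv'\<close> lost the edge \<open>av'\<close>, then \<open>uv'\<close> would force \<open>ua\<close>,
  and \<open>bc\<close> would force \<open>ba\<close>.\<close>

lemma triangle_apex:
  assumes ab: "(a, b) \<in> E" and ac: "(a, c) \<in> E" and bc: "(b, c) \<in> E"
    and not_ba: "((b, c), (b, a)) \<notin> \<Gamma>\<^sup>+" and not_ac: "((b, c), (a, c)) \<notin> \<Gamma>\<^sup>+"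
    and forced: "((b, c), (b', c')) \<in> \<Gamma>\<^sup>+"
  shows "(a, b') \<in> E \<and> (a, c') \<in> E \<and> ((a, b), (a, b')) \<in> \<Gamma>\<^sup>+ \<and> ((a, c), (a, c')) \<in> \<Gamma>\<^sup>+"
  using forced
proof (induction "(b', c')" arbitrary: b' c' rule: Gamma_trancl_induct)
  case base
  then show ?case
    using ab ac Gamma_trancl_refl by simp
next
  case (step_fst u v v')
  have "(a, v') \<in> E"
  proof (rule ccontr)
    assume "(a, v') \<notin> E"
    then have "((u, v'), (u, a)) \<in> \<Gamma>"
      using GammaI_fst[of u v' a] step_fst edge_sym by blast
    moreover have "((u, a), (b, a)) \<in> \<Gamma>\<^sup>+"
      using step_fst Gamma_trancl_swap Gamma_trancl_sym by blast
    ultimately show False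
      using not_ba step_fst(2) by (meson trancl_into_trancl trancl_trans)
  qed
  with step_fst show ?case
    using GammaI_fst[of a v v'] trancl_into_trancl by metis
next
  case (step_snd u u' v)
  have "(a, u') \<in> E"
  proof (rule ccontr)
    assume "(a, u') \<notin> E"
    then have "((u', v), (a, v)) \<in> \<Gamma>"
      using GammaI_snd[of u' v a] step_snd edge_sym by blast
    moreover have "((a, v), (a, c)) \<in> \<Gamma>\<^sup>+"
      using step_snd Gamma_trancl_sym by blast
    ultimately show False
      using not_ac step_snd(2) by (meson trancl_into_trancl trancl_trans)
  qed
  with step_snd show ?case
    using GammaI_fst[of a u u'] trancl_into_trancl by metis
qed

end

section \<open>Partitive sets\<close>

lemma partitiveI:
  assumes "Y \<subseteq> W"
    and "\<And>p q c. p \<in> Y \<Longrightarrow> q \<in> Y \<Longrightarrow> c \<in> W \<Longrightarrow> c \<notin> Y \<Longrightarrow>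
      ((p, c) \<in> D \<longleftrightarrow> (q, c) \<in> D) \<and> ((c, p) \<in> D \<longleftrightarrow> (c, q) \<in> D)"
  shows "partitive W D Y"
  unfolding partitive_def using assms by blast

lemma partitiveD:
  "partitive W D Y \<Longrightarrow> p \<in> Y \<Longrightarrow> q \<in> Y \<Longrightarrow> c \<in> W \<Longrightarrow> c \<notin> Y \<Longrightarrow>
    ((p, c) \<in> D \<longleftrightarrow> (q, c) \<in> D) \<and> ((c, p) \<in> D \<longleftrightarrow> (c, q) \<in> D)"
  unfolding partitive_def by blast

lemma partitive_subset: "partitive W D Y \<Longrightarrow> Y \<subseteq> W"
  unfolding partitive_def by blast

lemma partitive_contains_distinguishing_vertex:
  assumes "partitive W D Y" "p \<in> Y" "q \<in> Y" "c \<in> W" "(p, c) \<in> D" "(q, c) \<notin> D"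
  shows "c \<in> Y"
proof (rule ccontr)
  assume "c \<notin> Y"
  with assms show False
    using partitiveD[OF assms(1-4)] by blast
qed

lemma partitive_singleton: "x \<in> W \<Longrightarrow> partitive W D {x}"
  unfolding partitive_def by blast

lemma partitive_Union_common_point:
  assumes "\<And>Y. Y \<in> \<Y> \<Longrightarrow> partitive W D Y \<and> x \<in> Y"
  shows "partitive W D (\<Union>\<Y>)"
proof (rule partitiveI)
  show "\<Union>\<Y> \<subseteq> W"
    using assms partitive_subset by blast
next
  fix p q c
  assume "p \<in> \<Union>\<Y>" "q \<in> \<Union>\<Y>" and c: "c \<in> W" "c \<notin> \<Union>\<Y>"
  then obtain Y1 Y2 where "Y1 \<in> \<Y>" "p \<in> Y1" "Y2 \<in> \<Y>" "q \<in> Y2"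
    by blast
  with assms c show "((p, c) \<in> D \<longleftrightarrow> (q, c) \<in> D) \<and> ((c, p) \<in> D \<longleftrightarrow> (c, q) \<in> D)"
    using partitiveD[of W D Y1 p x c] partitiveD[of W D Y2 q x c] by blast
qed

lemma partitive_Un:
  "partitive W D X \<Longrightarrow> partitive W D Y \<Longrightarrow> x \<in> X \<Longrightarrow> x \<in> Y \<Longrightarrow> partitive W D (X \<union> Y)"
  using partitive_Union_common_point[of "{X, Y}" W D x] by auto

lemma quotient_edges_iff:
  assumes P: "partition_on W F" and F: "\<And>X. X \<in> F \<Longrightarrow> partitive W D X"
    and "X \<in> F" "Y \<in> F" "x \<in> X" "y \<in> Y"
  shows "(X, Y) \<in> quotient_edges D F \<longleftrightarrow> X \<noteq> Y \<and> (x, y) \<in> D"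
proof
  assume "(X, Y) \<in> quotient_edges D F"
  then obtain x' y' where "X \<noteq> Y" "x' \<in> X" "y' \<in> Y" "(x', y') \<in> D"
    unfolding quotient_edges_def by auto
  moreover have "X \<inter> Y = {}" if "X \<noteq> Y"
    using P assms(3,4) that unfolding partition_on_def disjoint_def by blast
  moreover have "X \<subseteq> W" "Y \<subseteq> W"
    using F[OF assms(3)] F[OF assms(4)] partitive_subset by auto
  ultimately show "X \<noteq> Y \<and> (x, y) \<in> D"
    using partitiveD[OF F[OF \<open>X \<in> F\<close>], of x x' y'] partitiveD[OF F[OF \<open>Y \<in> F\<close>], of y y' x]
      assms(5,6) by blast
next
  assume "X \<noteq> Y \<and> (x, y) \<in> D"
  then show "(X, Y) \<in> quotient_edges D F"
    unfolding quotient_edges_def using assms(3-6) by auto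
qed

lemma partition_on_Union_proper:
  assumes "partition_on W F" "\<X> \<subseteq> F" "Z \<in> F" "Z \<notin> \<X>"
  shows "\<Union>\<X> \<noteq> W"
proof
  assume "\<Union>\<X> = W"
  obtain z where "z \<in> Z"
    using partition_onD3[OF assms(1)] assms(3) by (metis ex_in_conv)
  then obtain X where "X \<in> \<X>" "z \<in> X"
    using partition_onD1[OF assms(1)] assms(3) \<open>\<Union>\<X> = W\<close> by blast
  moreover have "X \<in> F" "X \<noteq> Z"
    using \<open>X \<in> \<X>\<close> assms(2,4) by blast+
  then have "X \<inter> Z = {}"
    using disjointD[OF partition_onD2[OF assms(1)] _ assms(3)] by blast
  ultimately show False
    using \<open>z \<in> Z\<close> by blast
qed

lemma partitive_Union_of_quotient:
  assumes P: "partition_on W F" and F: "\<And>X. X \<in> F \<Longrightarrow> partitive W D X"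
    and \<X>: "partitive F (quotient_edges D F) \<X>"
  shows "partitive W D (\<Union>\<X>)"
proof (rule partitiveI)
  have "\<X> \<subseteq> F"
    using \<X> partitive_subset by blast
  then show "\<Union>\<X> \<subseteq> W"
    using P unfolding partition_on_def by auto
  fix p q c
  assume "p \<in> \<Union>\<X>" "q \<in> \<Union>\<X>" and c: "c \<in> W" "c \<notin> \<Union>\<X>"
  then obtain X1 X2 where X: "X1 \<in> \<X>" "p \<in> X1" "X2 \<in> \<X>" "q \<in> X2"
    by blast
  obtain Z where Z: "Z \<in> F" "c \<in> Z" "Z \<notin> \<X>"
    using c P unfolding partition_on_def by auto
  have "X1 \<in> F" "X2 \<in> F"
    using X \<open>\<X> \<subseteq> F\<close> by auto
  then have "(p, c) \<in> D \<longleftrightarrow> (X1, Z) \<in> quotient_edges D F" "(q, c) \<in> D \<longleftrightarrow> (X2, Z) \<in> quotient_edges D F"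
      "(c, p) \<in> D \<longleftrightarrow> (Z, X1) \<in> quotient_edges D F" "(c, q) \<in> D \<longleftrightarrow> (Z, X2) \<in> quotient_edges D F"
    using quotient_edges_iff[OF P F] X Z by blast+
  then show "((p, c) \<in> D \<longleftrightarrow> (q, c) \<in> D) \<and> ((c, p) \<in> D \<longleftrightarrow> (c, q) \<in> D)"
    using partitiveD[OF \<X> X(1,3) Z(1,3)] by blast
qed

lemma graph_isoI:
  "bij_betw f V1 V2 \<Longrightarrow> (\<And>a b. a \<in> V1 \<Longrightarrow> b \<in> V1 \<Longrightarrow> (a, b) \<in> E1 \<longleftrightarrow> (f a, f b) \<in> E2) \<Longrightarrow>
    graph_iso V1 E1 V2 E2"
  unfolding graph_iso_def by blast

lemma induced_edges_induced_edges:
  "V' \<subseteq> X \<Longrightarrow> induced_edges (induced_edges E X) V' = induced_edges E V'"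
  unfolding induced_edges_def by auto

lemma irrefl_induced_edges: "irrefl E \<Longrightarrow> irrefl (induced_edges E X)"
  unfolding irrefl_def induced_edges_def by blast

lemma quotient_iso_choice:
  assumes P: "partition_on W F" and F: "\<And>X. X \<in> F \<Longrightarrow> partitive W D X"
    and f: "\<And>X. X \<in> F \<Longrightarrow> f X \<in> X" and "irrefl D"
  shows "graph_iso F (quotient_edges D F) (f ` F) (induced_edges D (f ` F))"
proof (rule graph_isoI)
  have "inj_on f F"
  proof (rule inj_onI)
    fix X Y
    assume "X \<in> F" "Y \<in> F" "f X = f Y"
    show "X = Y"
    proof (rule ccontr)
      assume "X \<noteq> Y"
      with \<open>X \<in> F\<close> \<open>Y \<in> F\<close> have "X \<inter> Y = {}"
        by (rule disjointD[OF partition_onD2[OF P]])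
      then show False
        using f[OF \<open>X \<in> F\<close>] f[OF \<open>Y \<in> F\<close>] \<open>f X = f Y\<close> by (metis disjoint_iff)
    qed
  qed
  then show "bij_betw f F (f ` F)"
    by (rule inj_on_imp_bij_betw)
  fix X Y
  assume "X \<in> F" "Y \<in> F"
  then have "(X, Y) \<in> quotient_edges D F \<longleftrightarrow> X \<noteq> Y \<and> (f X, f Y) \<in> D"
    using quotient_edges_iff[OF P F _ _ f f] by blast
  also have "\<dots> \<longleftrightarrow> (f X, f Y) \<in> D"
    using irreflD[OF \<open>irrefl D\<close>] by blast
  also have "\<dots> \<longleftrightarrow> (f X, f Y) \<in> induced_edges D (f ` F)"
    using \<open>X \<in> F\<close> \<open>Y \<in> F\<close> by (simp add: induced_edges_def)
  finally show "(X, Y) \<in> quotient_edges D F \<longleftrightarrow> (f X, f Y) \<in> induced_edges D (f ` F)" .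
qed

lemma strong_partitiveD:
  assumes "strong_partitive W D X"
  shows "partitive W D X" and "partitive W D Y \<Longrightarrow> X \<inter> Y \<noteq> {} \<Longrightarrow> X \<subseteq> Y \<or> Y \<subseteq> X"
  using assms unfolding strong_partitive_def by blast+

lemma strong_partitiveI:
  "partitive W D X \<Longrightarrow> (\<And>Y. partitive W D Y \<Longrightarrow> X \<inter> Y \<noteq> {} \<Longrightarrow> X \<subseteq> Y \<or> Y \<subseteq> X) \<Longrightarrow>
    strong_partitive W D X"
  unfolding strong_partitive_def by blast

lemma max_strong_partitive_of_bipartition:
  assumes "W = X \<union> Y" "X \<inter> Y = {}" "X \<noteq> {}" "Y \<noteq> {}"
    and "strong_partitive W D X" and Y: "strong_partitive W D Y"
  shows "max_strong_partitive W D X"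
  unfolding max_strong_partitive_def
proof (intro conjI allI impI)
  show "strong_partitive W D X" "X \<noteq> W"
    using assms by auto
  fix Z
  assume Z: "strong_partitive W D Z \<and> Z \<noteq> W \<and> X \<subseteq> Z"
  then have "partitive W D Z"
    using strong_partitiveD(1) by blast
  then have "Z \<subseteq> W"
    by (rule partitive_subset)
  show "Z = X"
  proof (rule ccontr)
    assume "Z \<noteq> X"
    then have "Y \<inter> Z \<noteq> {}"
      using Z \<open>Z \<subseteq> W\<close> assms(1) by blast
    then have "Y \<subseteq> Z \<or> Z \<subseteq> Y"
      using strong_partitiveD(2)[OF Y \<open>partitive W D Z\<close>] by blast
    then show False
      using Z \<open>Z \<subseteq> W\<close> assms(1-3) by blast
  qed
qed

lemma strong_bipartition:
  assumes "W = X \<union> Y" "X \<inter> Y = {}" "X \<noteq> {}" "Y \<noteq> {}"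
    and "strong_partitive W D X" "strong_partitive W D Y"
  shows "partition_on W {X, Y}" and "{X, Y} \<noteq> {W}"
    and "\<forall>Z\<in>{X, Y}. max_strong_partitive W D Z"
proof -
  show "partition_on W {X, Y}"
    using assms(1-4) by (auto simp: partition_on_def disjoint_def)
  show "{X, Y} \<noteq> {W}"
    using assms(1-4) by auto
  have "Y \<inter> X = {}" "W = Y \<union> X"
    using assms(1,2) by auto
  then show "\<forall>Z\<in>{X, Y}. max_strong_partitive W D Z"
    using max_strong_partitive_of_bipartition assms by blast
qed

section \<open>Co-components\<close>

definition non_edges :: "'b set \<Rightarrow> ('b \<times> 'b) set \<Rightarrow> ('b \<times> 'b) set" where
  "non_edges W D = {(y, z). y \<in> W \<and> z \<in> W \<and> y \<noteq> z \<and> (y, z) \<notin> D}"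

definition co_component :: "'b set \<Rightarrow> ('b \<times> 'b) set \<Rightarrow> 'b \<Rightarrow> 'b set" where
  "co_component W D x = (non_edges W D)\<^sup>* `` {x}"

lemma rtrancl_leaves_set:
  assumes "(p, q) \<in> R\<^sup>*" "p \<in> Y" "q \<notin> Y"
  obtains p' q' where "(p, p') \<in> R\<^sup>*" "(p', q') \<in> R" "p' \<in> Y" "q' \<notin> Y"
  using assms by (induction rule: rtrancl_induct) (auto intro: rtrancl_into_rtrancl)

lemma mem_co_component_iff: "y \<in> co_component W D x \<longleftrightarrow> (x, y) \<in> (non_edges W D)\<^sup>*"
  unfolding co_component_def by simp

lemma self_in_co_component: "x \<in> co_component W D x"
  by (simp add: mem_co_component_iff)

lemma co_component_subset: "x \<in> W \<Longrightarrow> co_component W D x \<subseteq> W"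
proof -
  have "(x, y) \<in> (non_edges W D)\<^sup>* \<Longrightarrow> x \<in> W \<Longrightarrow> y \<in> W" for y
    by (induction rule: rtrancl_induct) (auto simp: non_edges_def)
  then show "x \<in> W \<Longrightarrow> co_component W D x \<subseteq> W"
    unfolding co_component_def by blast
qed

lemma co_component_adjacent:
  assumes "x \<in> W" "y \<in> co_component W D x" "z \<in> W" "z \<notin> co_component W D x"
  shows "(y, z) \<in> D"
proof (rule ccontr)
  assume "(y, z) \<notin> D"
  moreover have "y \<in> W" "y \<noteq> z"
    using co_component_subset[OF assms(1)] assms(2,4) by blast+
  ultimately have "(y, z) \<in> non_edges W D"
    using assms(3) unfolding non_edges_def by blast
  with assms(2,4) show False
    by (simp add: mem_co_component_iff rtrancl_into_rtrancl)
qed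

lemma co_component_sym:
  assumes "sym D" and "y \<in> co_component W D x"
  shows "x \<in> co_component W D y"
proof -
  have "sym (non_edges W D)"
    using assms(1) unfolding non_edges_def sym_def by blast
  then show ?thesis
    using assms(2) unfolding mem_co_component_iff by (simp add: sym_rtrancl[THEN symD])
qed

lemma co_components_meet:
  assumes "sym D" and "co_component W D x \<inter> co_component W D y \<noteq> {}"
  shows "y \<in> co_component W D x"
proof -
  obtain z where "z \<in> co_component W D x" "z \<in> co_component W D y"
    using assms(2) by blast
  then have "(x, z) \<in> (non_edges W D)\<^sup>*" "(z, y) \<in> (non_edges W D)\<^sup>*"
    using co_component_sym[OF assms(1)] unfolding mem_co_component_iff by blast+
  then show ?thesis
    unfolding mem_co_component_iff by (rule rtrancl_trans)
qed

lemma partitive_co_component: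
  assumes "sym D" and "x \<in> W"
  shows "partitive W D (co_component W D x)"
proof (rule partitiveI)
  show "co_component W D x \<subseteq> W"
    using assms(2) by (rule co_component_subset)
  fix p q c
  assume "p \<in> co_component W D x" "q \<in> co_component W D x" "c \<in> W" "c \<notin> co_component W D x"
  then have "(p, c) \<in> D" "(q, c) \<in> D"
    using co_component_adjacent[OF assms(2)] by simp_all
  then show "((p, c) \<in> D \<longleftrightarrow> (q, c) \<in> D) \<and> ((c, p) \<in> D \<longleftrightarrow> (c, q) \<in> D)"
    using symD[OF assms(1)] by blast
qed

text \<open>If \<open>Y\<close> met the co-component without containing it, a path of non-edges inside the
  co-component would leave \<open>Y\<close> along a non-edge \<open>p'q'\<close>; but \<open>q'\<close> is joined to every vertex
  outside the co-component, in particular to one in \<open>Y\<close>, hence to \<open>p'\<close>.\<close>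

lemma strong_partitive_co_component:
  assumes "sym D" and x: "x \<in> W"
  shows "strong_partitive W D (co_component W D x)"
proof (rule strong_partitiveI)
  show "partitive W D (co_component W D x)"
    using assms by (rule partitive_co_component)
  fix Y
  assume Y: "partitive W D Y" and "co_component W D x \<inter> Y \<noteq> {}"
  show "co_component W D x \<subseteq> Y \<or> Y \<subseteq> co_component W D x"
  proof (rule ccontr)
    assume "\<not> ?thesis"
    then obtain p q y where p: "p \<in> co_component W D x" "p \<in> Y"
      and q: "q \<in> co_component W D x" "q \<notin> Y" and y: "y \<in> Y" "y \<notin> co_component W D x"
      using \<open>co_component W D x \<inter> Y \<noteq> {}\<close> by blast
    have "(p, x) \<in> (non_edges W D)\<^sup>*" "(x, q) \<in> (non_edges W D)\<^sup>*"
      using co_component_sym[OF assms(1) p(1)] q(1) unfolding mem_co_component_iff by simp_all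
    then have "(p, q) \<in> (non_edges W D)\<^sup>*"
      by (rule rtrancl_trans)
    then obtain p' q' where "(p, p') \<in> (non_edges W D)\<^sup>*" and pq': "(p', q') \<in> non_edges W D"
      and "p' \<in> Y" "q' \<notin> Y"
      using p(2) q(2) by (rule rtrancl_leaves_set)
    with p(1) have "(x, q') \<in> (non_edges W D)\<^sup>*"
      unfolding mem_co_component_iff by (meson rtrancl_into_rtrancl rtrancl_trans)
    moreover have "q' \<in> W"
      using pq' unfolding non_edges_def by simp
    ultimately have "(q', y) \<in> D"
      using co_component_adjacent[OF x _ _ y(2)] partitive_subset[OF Y] y(1)
      unfolding mem_co_component_iff by blast
    then have "(q', p') \<in> D"
      using partitiveD[OF Y \<open>p' \<in> Y\<close> y(1) \<open>q' \<in> W\<close> \<open>q' \<notin> Y\<close>] by blast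
    with pq' show False
      using symD[OF assms(1)] unfolding non_edges_def by blast
  qed
qed

definition connected_graph :: "'b set \<Rightarrow> ('b \<times> 'b) set \<Rightarrow> bool" where
  "connected_graph W D \<longleftrightarrow>
     (\<forall>S. S \<subseteq> W \<and> S \<noteq> {} \<and> S \<noteq> W \<longrightarrow> (\<exists>s\<in>S. \<exists>t\<in>W - S. (s, t) \<in> D))"

lemma connected_graphD:
  "connected_graph W D \<Longrightarrow> S \<subseteq> W \<Longrightarrow> S \<noteq> {} \<Longrightarrow> S \<noteq> W \<Longrightarrow> \<exists>s\<in>S. \<exists>t\<in>W - S. (s, t) \<in> D"
  unfolding connected_graph_def by blast

lemma connected_graph_complement_if_co_component:
  assumes "sym D" and W: "co_component W D x = W"
  shows "connected_graph W (- D)"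
  unfolding connected_graph_def
proof (intro allI impI)
  fix S
  assume S: "S \<subseteq> W \<and> S \<noteq> {} \<and> S \<noteq> W"
  then obtain s t where "s \<in> S" "t \<in> W" "t \<notin> S"
    by blast
  have reach: "(x, z) \<in> (non_edges W D)\<^sup>*" if "z \<in> W" for z
    using that W unfolding mem_co_component_iff[symmetric] by simp
  have "x \<in> W"
    using W self_in_co_component[of x W D] by simp
  show "\<exists>s\<in>S. \<exists>t\<in>W - S. (s, t) \<in> - D"
  proof (cases "x \<in> S")
    case True
    obtain p q where "(x, p) \<in> (non_edges W D)\<^sup>*" "(p, q) \<in> non_edges W D" "p \<in> S" "q \<notin> S"
      using reach[OF \<open>t \<in> W\<close>] True \<open>t \<notin> S\<close> by (rule rtrancl_leaves_set)
    then show ?thesis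
      unfolding non_edges_def by blast
  next
    case False
    have "(x, s) \<in> (non_edges W D)\<^sup>*"
      using reach S \<open>s \<in> S\<close> by blast
    moreover have "x \<in> W - S" "s \<notin> W - S"
      using False \<open>x \<in> W\<close> \<open>s \<in> S\<close> by simp_all
    ultimately obtain p q where "(x, p) \<in> (non_edges W D)\<^sup>*" "(p, q) \<in> non_edges W D"
        "p \<in> W - S" "q \<notin> W - S"
      by (rule rtrancl_leaves_set)
    then show ?thesis
      using symD[OF assms(1)] unfolding non_edges_def by blast
  qed
qed

section \<open>Graphs that are connected and co-connected\<close>

text \<open>For infinite graphs, connectivity of the graph and its complement does not prevent the
  proper partitive sets through a vertex from covering everything; \<open>unsplittable\<close> excludes
  this (in the application, \<open>y\<close> is an \<open>M\<close>-neighbour of \<open>x\<close>).\<close>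

locale connected_coconnected_graph =
  fixes W :: "'b set" and D :: "('b \<times> 'b) set"
  assumes sym_D: "sym D"
    and connected: "connected_graph W D"
    and coconnected: "connected_graph W (- D)"
    and unsplittable: "\<And>x. x \<in> W \<Longrightarrow>
      \<exists>y\<in>W. y \<noteq> x \<and> (\<forall>Y. partitive W D Y \<and> x \<in> Y \<and> y \<in> Y \<longrightarrow> Y = W)"
begin

text \<open>If two overlapping proper partitive sets covered \<open>W\<close>, every pair across the cut
  \<open>(W - Z, Z)\<close> would have the adjacency status of one fixed pair, so the cut would be crossed
  either by no edge or by no non-edge.\<close>

lemma partitive_Un_proper:
  assumes Y: "partitive W D Y" and Z: "partitive W D Z" and "Y \<noteq> W" "Z \<noteq> W" "r \<in> Y" "r \<in> Z"
  shows "Y \<union> Z \<noteq> W"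
proof
  assume cover: "Y \<union> Z = W"
  obtain q where q: "q \<in> W" "q \<notin> Y"
    using partitive_subset[OF Y] \<open>Y \<noteq> W\<close> by blast
  have "r \<in> W"
    using cover \<open>r \<in> Y\<close> by blast
  have same: "(s, t) \<in> D \<longleftrightarrow> (r, q) \<in> D" if "s \<in> W - Z" and "t \<in> W - (W - Z)" for s t
  proof -
    have "s \<in> Y" "t \<in> Z" "q \<in> Z"
      using that q cover by auto
    then have "(t, s) \<in> D \<longleftrightarrow> (r, s) \<in> D" "(r, s) \<in> D \<longleftrightarrow> (q, s) \<in> D" "(s, q) \<in> D \<longleftrightarrow> (r, q) \<in> D"
      using partitiveD[OF Z _ _ _ _] partitiveD[OF Y _ _ q] that \<open>r \<in> Y\<close> \<open>r \<in> Z\<close> by blast+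
    then show ?thesis
      using symD[OF sym_D] by blast
  qed
  have S: "W - Z \<subseteq> W" "W - Z \<noteq> {}" "W - Z \<noteq> W"
    using partitive_subset[OF Z] \<open>Z \<noteq> W\<close> \<open>r \<in> W\<close> \<open>r \<in> Z\<close> by auto
  obtain s t where "s \<in> W - Z" "t \<in> W - (W - Z)" "(s, t) \<in> D"
    using connected_graphD[OF connected S] by blast
  moreover obtain s' t' where "s' \<in> W - Z" "t' \<in> W - (W - Z)" "(s', t') \<notin> D"
    using connected_graphD[OF coconnected S] by blast
  ultimately show False
    using same by blast
qed

definition max_module :: "'b \<Rightarrow> 'b set" where
  "max_module x = \<Union>{Y. partitive W D Y \<and> Y \<noteq> W \<and> x \<in> Y}"

lemma partitive_max_module: "partitive W D (max_module x)"
  unfolding max_module_def by (rule partitive_Union_common_point[where x = x]) blast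

lemma max_module_subset: "max_module x \<subseteq> W"
  using partitive_max_module by (rule partitive_subset)

lemma mem_max_module:
  assumes "x \<in> W"
  shows "x \<in> max_module x"
proof -
  obtain y where "y \<in> W" "y \<noteq> x"
    using unsplittable[OF assms] by blast
  then have "{x} \<noteq> W"
    by blast
  then show ?thesis
    unfolding max_module_def using partitive_singleton[OF assms] by blast
qed

lemma max_module_neq:
  assumes "x \<in> W"
  shows "max_module x \<noteq> W"
proof
  assume "max_module x = W"
  obtain y where "y \<in> W" "y \<noteq> x" and y: "\<forall>Y. partitive W D Y \<and> x \<in> Y \<and> y \<in> Y \<longrightarrow> Y = W"
    using unsplittable[OF assms] by blast
  then obtain Y where "partitive W D Y" "Y \<noteq> W" "x \<in> Y" "y \<in> Y"
    using \<open>max_module x = W\<close> unfolding max_module_def by blast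
  with y show False
    by blast
qed

lemma partitive_subset_max_module:
  assumes x: "x \<in> W" and Y: "partitive W D Y" "Y \<noteq> W" and "r \<in> Y" "r \<in> max_module x"
  shows "Y \<subseteq> max_module x"
proof -
  have "partitive W D (Y \<union> max_module x)"
    using partitive_Un[OF Y(1) partitive_max_module] assms(4,5) by blast
  moreover have "Y \<union> max_module x \<noteq> W"
    using partitive_Un_proper[OF Y(1) partitive_max_module Y(2) max_module_neq[OF x]] assms(4,5)
    by blast
  moreover have "x \<in> Y \<union> max_module x"
    using mem_max_module[OF x] by blast
  ultimately have "Y \<union> max_module x \<subseteq> max_module x"
    unfolding max_module_def by blast
  then show ?thesis
    by blast
qed

lemma max_module_eq:
  assumes "x \<in> W" and "y \<in> max_module x"
  shows "max_module y = max_module x"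
proof
  have "y \<in> W"
    using assms(2) max_module_subset by blast
  show "max_module y \<subseteq> max_module x"
    using partitive_subset_max_module[OF assms(1) partitive_max_module max_module_neq[OF \<open>y \<in> W\<close>]]
      mem_max_module[OF \<open>y \<in> W\<close>] assms(2) by blast
  show "max_module x \<subseteq> max_module y"
    using partitive_subset_max_module[OF \<open>y \<in> W\<close> partitive_max_module max_module_neq[OF assms(1)]]
      mem_max_module[OF \<open>y \<in> W\<close>] assms(2) by blast
qed

lemma max_strong_partitive_max_module:
  assumes x: "x \<in> W"
  shows "max_strong_partitive W D (max_module x)"
  unfolding max_strong_partitive_def
proof (intro conjI allI impI)
  show strong: "strong_partitive W D (max_module x)"
  proof (rule strong_partitiveI)
    fix Y
    assume "partitive W D Y" "max_module x \<inter> Y \<noteq> {}"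
    then show "max_module x \<subseteq> Y \<or> Y \<subseteq> max_module x"
      using partitive_subset_max_module[OF x] max_module_subset by (cases "Y = W") blast+
  qed (rule partitive_max_module)
  show "max_module x \<noteq> W"
    using x by (rule max_module_neq)
  fix Y
  assume "strong_partitive W D Y \<and> Y \<noteq> W \<and> max_module x \<subseteq> Y"
  moreover have "x \<in> Y" if "max_module x \<subseteq> Y"
    using that mem_max_module[OF x] by blast
  ultimately have "Y \<subseteq> max_module x"
    unfolding max_module_def using strong_partitiveD(1) by blast
  with \<open>strong_partitive W D Y \<and> Y \<noteq> W \<and> max_module x \<subseteq> Y\<close> show "Y = max_module x"
    by blast
qed

lemma partition_on_max_modules: "partition_on W (max_module ` W)"
  unfolding partition_on_def disjoint_def
proof (intro conjI ballI impI)
  show "\<Union> (max_module ` W) = W"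
    using max_module_subset mem_max_module by blast
  show "{} \<notin> max_module ` W"
    using mem_max_module by blast
  fix X Y
  assume "X \<in> max_module ` W" "Y \<in> max_module ` W" "X \<noteq> Y"
  then obtain x y where "x \<in> W" "y \<in> W" "X = max_module x" "Y = max_module y"
    by blast
  with \<open>X \<noteq> Y\<close> show "X \<inter> Y = {}"
    using max_module_eq by blast
qed

lemma max_modules_neq_single:
  assumes "x \<in> W"
  shows "max_module ` W \<noteq> {W}"
proof
  assume "max_module ` W = {W}"
  then have "max_module x = W"
    using assms by blast
  then show False
    using max_module_neq[OF assms] by simp
qed

text \<open>A partitive set of the quotient with at least two members would lift to a proper
  partitive set meeting two different maximal ones.\<close>

lemma indecomposable_max_module_quotient:
  "indecomposable (max_module ` W) (quotient_edges D (max_module ` W))"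
  unfolding indecomposable_def
proof (intro allI impI)
  let ?F = "max_module ` W"
  fix \<X>
  assume \<X>: "partitive ?F (quotient_edges D ?F) \<X>"
  show "\<X> = {} \<or> (\<exists>X. \<X> = {X}) \<or> \<X> = ?F"
  proof (rule ccontr)
    assume nontrivial: "\<not> ?thesis"
    have "\<X> \<subseteq> ?F"
      using \<X> by (rule partitive_subset)
    then obtain Z where "Z \<in> ?F" "Z \<notin> \<X>"
      using nontrivial by blast
    then have proper: "\<Union>\<X> \<noteq> W"
      using partition_on_Union_proper[OF partition_on_max_modules \<open>\<X> \<subseteq> ?F\<close>] by blast
    obtain X1 X2 where "X1 \<in> \<X>" "X2 \<in> \<X>" "X1 \<noteq> X2"
      using nontrivial by blast
    then obtain x1 x2 where "x1 \<in> W" "x2 \<in> W" "max_module x1 \<in> \<X>" "max_module x2 \<in> \<X>"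
        "max_module x1 \<noteq> max_module x2"
      using \<open>\<X> \<subseteq> ?F\<close> by blast
    have "partitive W D (\<Union>\<X>)"
      using partitive_Union_of_quotient[OF partition_on_max_modules _ \<X>] partitive_max_module
      by blast
    then have "\<Union>\<X> \<subseteq> max_module x1"
      using partitive_subset_max_module[OF \<open>x1 \<in> W\<close> _ proper] mem_max_module[OF \<open>x1 \<in> W\<close>]
        \<open>max_module x1 \<in> \<X>\<close> by blast
    then have "x2 \<in> max_module x1"
      using mem_max_module[OF \<open>x2 \<in> W\<close>] \<open>max_module x2 \<in> \<X>\<close> by blast
    then show False
      using max_module_eq[OF \<open>x1 \<in> W\<close>] \<open>max_module x1 \<noteq> max_module x2\<close> by blast
  qed
qed

end

section \<open>The multiplex\<close>

locale multiplex_graph = simple_graph E for E :: "('a \<times> 'a) set" +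
  fixes VS :: "'a set"
begin

abbreviation M :: "('a \<times> 'a) set" where "M \<equiv> multiplex E VS"
abbreviation Mt :: "'a set" where "Mt \<equiv> Field M"
abbreviation D :: "('a \<times> 'a) set" where "D \<equiv> induced_edges E Mt"

lemma M_edges: "e \<in> M \<Longrightarrow> e \<in> E"
  unfolding multiplex_eq using Gamma_trancl_edges by blast

lemma M_closed: "e \<in> M \<Longrightarrow> (e, e') \<in> \<Gamma>\<^sup>+ \<Longrightarrow> e' \<in> M"
  unfolding multiplex_eq by (meson Image_iff trancl_trans)

lemma M_sym: "(x, y) \<in> M \<Longrightarrow> (y, x) \<in> M"
  unfolding multiplex_eq using Gamma_trancl_swap induced_edges_sym by fast

lemma mem_Mt_iff: "x \<in> Mt \<longleftrightarrow> (\<exists>y. (x, y) \<in> M)"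
  unfolding Field_def using M_sym by blast

lemma M_ends_in_Mt: "(x, y) \<in> M \<Longrightarrow> x \<in> Mt \<and> y \<in> Mt"
  unfolding Field_def by blast

lemma D_iff: "x \<in> Mt \<Longrightarrow> y \<in> Mt \<Longrightarrow> (x, y) \<in> D \<longleftrightarrow> (x, y) \<in> E"
  unfolding induced_edges_def by simp

text \<open>A step from \<open>(p, q)\<close> to \<open>(p, q')\<close> with \<open>q q'\<close> a non-edge: \<open>p\<close> is joined to \<open>q'\<close> and
  \<open>q\<close> is not, so \<open>q'\<close> cannot lie outside a partitive set containing \<open>p\<close> and \<open>q\<close>.\<close>

lemma partitive_contains_forced_edges:
  assumes Y: "partitive Mt D Y" and xy: "(x, y) \<in> M" "x \<in> Y" "y \<in> Y"
    and forced: "((x, y), (u, v)) \<in> \<Gamma>\<^sup>+"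
  shows "u \<in> Y \<and> v \<in> Y"
  using forced
proof (induction "(u, v)" arbitrary: u v rule: Gamma_trancl_induct)
  case base
  then show ?case
    using xy by simp
next
  case (step_fst p q q')
  then have "p \<in> Mt" "q' \<in> Mt"
    using M_closed[OF xy(1)] M_ends_in_Mt by blast+
  then have "(p, q') \<in> D" "(q, q') \<notin> D"
    using step_fst(4,5) unfolding induced_edges_def by blast+
  then have "q' \<in> Y"
    using partitive_contains_distinguishing_vertex[OF Y _ _ \<open>q' \<in> Mt\<close>] step_fst(6) by blast
  with step_fst show ?case
    by simp
next
  case (step_snd p p' q)
  then have "q \<in> Mt" "p' \<in> Mt"
    using M_closed[OF xy(1)] M_ends_in_Mt by blast+
  then have "(q, p') \<in> D" "(p, p') \<notin> D"
    using step_snd(4,5) edge_sym unfolding induced_edges_def by blast+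
  then have "p' \<in> Y"
    using partitive_contains_distinguishing_vertex[OF Y _ _ \<open>p' \<in> Mt\<close>] step_snd(6) by blast
  with step_snd show ?case
    by simp
qed

end

section \<open>Multiplexes of rank one\<close>

locale rank_one_multiplex = multiplex_graph E VS for E :: "('a \<times> 'a) set" and VS +
  fixes a b :: 'a
  assumes VS_eq: "VS = {a, b}" and ab_edge: "(a, b) \<in> E"
begin

lemma M_iff_forced: "(u, v) \<in> M \<longleftrightarrow> ((a, b), (u, v)) \<in> \<Gamma>\<^sup>+ \<or> ((a, b), (v, u)) \<in> \<Gamma>\<^sup>+"
proof -
  have "induced_edges E VS = {(a, b), (b, a)}"
    unfolding VS_eq induced_edges_def using ab_edge edge_sym no_loop by auto
  then show ?thesis
    unfolding multiplex_eq using Gamma_trancl_swap[of b a u v] Gamma_trancl_swap[of a b v u] by auto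
qed

lemma ab_in_M: "(a, b) \<in> M"
  using M_iff_forced Gamma_trancl_refl ab_edge by blast

lemma a_in_Mt: "a \<in> Mt" and b_in_Mt: "b \<in> Mt"
  using M_ends_in_Mt[OF ab_in_M] by auto

lemma M_edges_forced:
  assumes "(x, y) \<in> M" "(u, v) \<in> M"
  shows "((x, y), (u, v)) \<in> \<Gamma>\<^sup>+ \<or> ((x, y), (v, u)) \<in> \<Gamma>\<^sup>+"
proof -
  have join: "(f, f') \<in> \<Gamma>\<^sup>+" if "((a, b), f) \<in> \<Gamma>\<^sup>+" "((a, b), f') \<in> \<Gamma>\<^sup>+" for f f'
    using that by (meson Gamma_trancl_sym trancl_trans)
  from assms show ?thesis
    unfolding M_iff_forced using join Gamma_trancl_swap[of y x] by blast
qed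

lemma mem_Mt_forced_end:
  assumes "z \<in> Mt"
  obtains u v where "((a, b), (u, v)) \<in> \<Gamma>\<^sup>+" "z = u \<or> z = v"
  using assms unfolding mem_Mt_iff M_iff_forced by blast

lemma partitive_eq_Mt_if_M_edge:
  assumes Y: "partitive Mt D Y" and "(x, y) \<in> M" "x \<in> Y" "y \<in> Y"
  shows "Y = Mt"
proof
  show "Y \<subseteq> Mt"
    using Y by (rule partitive_subset)
  show "Mt \<subseteq> Y"
  proof
    fix z
    assume "z \<in> Mt"
    then obtain w where "(z, w) \<in> M"
      unfolding mem_Mt_iff by blast
    then have "((x, y), (z, w)) \<in> \<Gamma>\<^sup>+ \<or> ((x, y), (w, z)) \<in> \<Gamma>\<^sup>+"
      using M_edges_forced[OF assms(2)] by blast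
    then show "z \<in> Y"
      using partitive_contains_forced_edges[OF assms] by blast
  qed
qed

lemma connected_Mt: "connected_graph Mt D"
  unfolding connected_graph_def
proof (intro allI impI)
  fix S
  assume S: "S \<subseteq> Mt \<and> S \<noteq> {} \<and> S \<noteq> Mt"
  show "\<exists>s\<in>S. \<exists>t\<in>Mt - S. (s, t) \<in> D"
  proof (rule ccontr)
    assume "\<not> ?thesis"
    then have no_cross: "u \<in> S \<longleftrightarrow> v \<in> S" if "(u, v) \<in> M" for u v
      using that M_sym M_ends_in_Mt M_edges D_iff by blast
    have "(u \<in> S \<longleftrightarrow> a \<in> S) \<and> (v \<in> S \<longleftrightarrow> a \<in> S)" if "((a, b), (u, v)) \<in> \<Gamma>\<^sup>+" for u v
      using that
    proof (induction "(u, v)" arbitrary: u v rule: Gamma_trancl_induct)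
      case base
      then show ?case
        using no_cross[OF ab_in_M] by simp
    next
      case (step_fst p q q')
      then show ?case
        using no_cross M_closed[OF ab_in_M step_fst(2)] by blast
    next
      case (step_snd p p' q)
      then show ?case
        using no_cross M_closed[OF ab_in_M step_snd(2)] by blast
    qed
    then have "z \<in> S \<longleftrightarrow> a \<in> S" if "z \<in> Mt" for z
      using that by (elim mem_Mt_forced_end) blast
    then show False
      using S by blast
  qed
qed

lemma M_edge_non_M_edge_adjacent:
  assumes "(w, z) \<in> M" "(w, w') \<in> E" "(w, w') \<notin> M"
  shows "(w', z) \<in> E"
proof (rule ccontr)
  assume "(w', z) \<notin> E"
  then have "((w, z), (w, w')) \<in> \<Gamma>"
    using GammaI_fst M_edges[OF assms(1)] assms(2) edge_sym by blast
  then show False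
    using M_closed[OF assms(1)] assms(3) by blast
qed

lemma non_M_apex_step:
  assumes "(s, t) \<in> M" "(s, t') \<in> M" "(t, t') \<notin> E"
    and "(s, c) \<in> E" "(s, c) \<notin> M" "(t, c) \<in> E" "(t, c) \<notin> M"
  shows "(t', c) \<in> E \<and> (t', c) \<notin> M"
proof -
  have "(t', c) \<in> E"
    using M_edge_non_M_edge_adjacent[OF assms(2,4,5)] edge_sym by blast
  moreover have "(t', c) \<notin> M"
  proof
    assume "(t', c) \<in> M"
    moreover have "((t', c), (t, c)) \<in> \<Gamma>"
      using GammaI_snd \<open>(t', c) \<in> E\<close> assms(3,6) edge_sym by blast
    ultimately show False
      using M_closed assms(7) by blast
  qed
  ultimately show ?thesis ..
qed

text \<open>Along \<open>\<Gamma>\<close>-steps from \<open>xz\<close>, both ends stay joined to \<open>c\<close> by edges outside \<open>M\<close>.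
  As \<open>M\<close> is a single color class, a vertex \<open>c\<close> of \<open>Mt\<close> is an end of such an edge and would
  be joined to itself.\<close>

lemma non_M_apex_notin_Mt:
  assumes xz: "(x, z) \<in> M" and "(x, c) \<in> E" "(x, c) \<notin> M" "(z, c) \<in> E" "(z, c) \<notin> M"
  shows "c \<notin> Mt"
proof
  assume "c \<in> Mt"
  have apex: "(u, c) \<in> E \<and> (u, c) \<notin> M \<and> (v, c) \<in> E \<and> (v, c) \<notin> M"
    if "((x, z), (u, v)) \<in> \<Gamma>\<^sup>+" for u v
    using that
  proof (induction "(u, v)" arbitrary: u v rule: Gamma_trancl_induct)
    case base
    then show ?case
      using assms by simp
  next
    case (step_fst u v v')
    then show ?case
      using non_M_apex_step[of u v v' c] M_closed[OF xz] by blast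
  next
    case (step_snd u u' v)
    then show ?case
      using non_M_apex_step[of v u u' c] M_closed[OF xz] M_sym edge_sym by blast
  qed
  obtain w where "(c, w) \<in> M"
    using \<open>c \<in> Mt\<close> mem_Mt_iff by blast
  then have "((x, z), (c, w)) \<in> \<Gamma>\<^sup>+ \<or> ((x, z), (w, c)) \<in> \<Gamma>\<^sup>+"
    using M_edges_forced[OF xz] by blast
  then show False
    using apex no_loop by blast
qed

definition non_M_edges :: "('a \<times> 'a) set" where
  "non_M_edges = {(u, v). u \<in> Mt \<and> v \<in> Mt \<and> (u, v) \<in> E \<and> (u, v) \<notin> M}"

lemma non_M_path_keeps_M_neighbour:
  assumes "(x, w) \<in> non_M_edges\<^sup>*" and "(x, z) \<in> M"
  shows "(w, z) \<in> M"
  using assms(1)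
proof (induction rule: rtrancl_induct)
  case base
  show ?case
    using assms(2) .
next
  case (step w w')
  then have ww': "(w, w') \<in> E" "(w, w') \<notin> M" "w' \<in> Mt"
    unfolding non_M_edges_def by auto
  have "(z, w') \<in> E"
    using M_edge_non_M_edge_adjacent[OF step.IH ww'(1,2)] edge_sym by blast
  then show ?case
    using non_M_apex_notin_Mt[OF step.IH ww'(1,2)] ww'(3) edge_sym M_sym by blast
qed

lemma non_M_component_subset: "x \<in> Mt \<Longrightarrow> non_M_edges\<^sup>* `` {x} \<subseteq> Mt"
proof -
  have "(x, y) \<in> non_M_edges\<^sup>* \<Longrightarrow> x \<in> Mt \<Longrightarrow> y \<in> Mt" for y
    by (induction rule: rtrancl_induct) (auto simp: non_M_edges_def)
  then show "x \<in> Mt \<Longrightarrow> non_M_edges\<^sup>* `` {x} \<subseteq> Mt"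
    by blast
qed

lemma non_M_component_neq_Mt:
  assumes "x \<in> Mt"
  shows "non_M_edges\<^sup>* `` {x} \<noteq> Mt"
proof
  assume "non_M_edges\<^sup>* `` {x} = Mt"
  obtain z where "(x, z) \<in> M"
    using assms mem_Mt_iff by blast
  moreover have "(x, z) \<in> non_M_edges\<^sup>*"
    using M_ends_in_Mt[OF \<open>(x, z) \<in> M\<close>] \<open>non_M_edges\<^sup>* `` {x} = Mt\<close> by blast
  ultimately have "(z, z) \<in> M"
    using non_M_path_keeps_M_neighbour by blast
  then show False
    using M_edges no_loop by blast
qed

text \<open>Crossing an edge \<open>ww'\<close> outside \<open>M\<close> does not change the neighbourhood beyond the
  component: an edge from \<open>w\<close> to a vertex beyond it lies in \<open>M\<close>, so it forces the corresponding
  edge from \<open>w'\<close>.\<close>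

lemma non_M_component_same_outer_neighbours:
  assumes x: "x \<in> Mt" and y: "(x, y) \<in> non_M_edges\<^sup>*"
    and z: "z \<in> Mt" "z \<notin> non_M_edges\<^sup>* `` {x}"
  shows "(y, z) \<in> E \<longleftrightarrow> (x, z) \<in> E"
proof -
  have in_M: "(v, z) \<in> M" if "(x, v) \<in> non_M_edges\<^sup>*" "(v, z) \<in> E" for v
  proof (rule ccontr)
    assume "(v, z) \<notin> M"
    moreover have "v \<in> Mt"
      using that(1) non_M_component_subset[OF x] by blast
    ultimately have "(v, z) \<in> non_M_edges"
      using that(2) z(1) unfolding non_M_edges_def by blast
    with that(1) z(2) show False
      by (meson Image_singleton_iff rtrancl_into_rtrancl)
  qed
  show ?thesis
    using y
  proof (induction rule: rtrancl_induct)
    case base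
    show ?case ..
  next
    case (step w w')
    have ww': "(w, w') \<in> E" "(w, w') \<notin> M"
      using step.hyps(2) unfolding non_M_edges_def by auto
    have "(x, w') \<in> non_M_edges\<^sup>*"
      using step.hyps by (rule rtrancl_into_rtrancl)
    have "(w, z) \<in> E \<longleftrightarrow> (w', z) \<in> E"
      using M_edge_non_M_edge_adjacent[OF in_M[OF step.hyps(1)] ww'(1,2)]
        M_edge_non_M_edge_adjacent[OF in_M[OF \<open>(x, w') \<in> non_M_edges\<^sup>*\<close>], of w]
        ww' edge_sym M_sym by blast
    with step.IH show ?case
      by simp
  qed
qed

lemma partitive_non_M_component:
  assumes x: "x \<in> Mt"
  shows "partitive Mt D (non_M_edges\<^sup>* `` {x})"
proof (rule partitiveI)
  let ?K = "non_M_edges\<^sup>* `` {x}"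
  show "?K \<subseteq> Mt"
    using x by (rule non_M_component_subset)
  fix p q c
  assume "p \<in> ?K" "q \<in> ?K" and c: "c \<in> Mt" "c \<notin> ?K"
  moreover have "p \<in> Mt" "q \<in> Mt"
    using calculation(1,2) non_M_component_subset[OF x] by blast+
  ultimately show "((p, c) \<in> D \<longleftrightarrow> (q, c) \<in> D) \<and> ((c, p) \<in> D \<longleftrightarrow> (c, q) \<in> D)"
    using non_M_component_same_outer_neighbours[OF x _ c] D_iff edge_sym by blast
qed

lemma Mt_subset_co_components: "Mt \<subseteq> co_component Mt D a \<union> co_component Mt D b"
proof -
  have "u \<in> co_component Mt D a \<and> v \<in> co_component Mt D b" if "((a, b), (u, v)) \<in> \<Gamma>\<^sup>+" for u v
    using that
  proof (induction "(u, v)" arbitrary: u v rule: Gamma_trancl_induct)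
    case base
    show ?case
      by (intro conjI self_in_co_component)
  next
    case (step_fst u v v')
    then have "(u, v) \<in> M" "(u, v') \<in> M"
      using M_closed[OF ab_in_M] by blast+
    then have "v = v' \<or> (v, v') \<in> non_edges Mt D"
      using step_fst(5) M_ends_in_Mt unfolding non_edges_def induced_edges_def by blast
    with step_fst(6) show ?case
      unfolding mem_co_component_iff by (auto intro: rtrancl_into_rtrancl)
  next
    case (step_snd u u' v)
    then have "(u, v) \<in> M" "(u', v) \<in> M"
      using M_closed[OF ab_in_M] by blast+
    then have "u = u' \<or> (u, u') \<in> non_edges Mt D"
      using step_snd(5) M_ends_in_Mt unfolding non_edges_def induced_edges_def by blast
    with step_snd(6) show ?case
      unfolding mem_co_component_iff by (auto intro: rtrancl_into_rtrancl)
  qed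
  then show ?thesis
    by (auto elim: mem_Mt_forced_end)
qed

lemma co_disconnected_bipartition:
  assumes "co_component Mt D a \<noteq> Mt"
  shows "Mt = co_component Mt D a \<union> co_component Mt D b"
    and "co_component Mt D a \<inter> co_component Mt D b = {}"
proof -
  have "b \<notin> co_component Mt D a"
    using partitive_eq_Mt_if_M_edge[OF partitive_co_component[OF sym_induced_edges a_in_Mt] ab_in_M]
      self_in_co_component[of a Mt D] assms by blast
  then show "co_component Mt D a \<inter> co_component Mt D b = {}"
    using co_components_meet[OF sym_induced_edges] by blast
  show "Mt = co_component Mt D a \<union> co_component Mt D b"
    using Mt_subset_co_components co_component_subset[OF a_in_Mt] co_component_subset[OF b_in_Mt]
    by blast
qed

lemma quotient_iso_simplex_if_co_disconnected:
  assumes "co_component Mt D a \<noteq> Mt"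
  shows "\<exists>F. partition_on Mt F \<and> F \<noteq> {Mt} \<and> (\<forall>X\<in>F. max_strong_partitive Mt D X) \<and>
    graph_iso F (quotient_edges D F) VS (induced_edges E VS)"
proof -
  let ?A = "co_component Mt D a" and ?B = "co_component Mt D b"
  let ?F = "{?A, ?B}"
  have "a \<in> ?A" "b \<in> ?B"
    by (rule self_in_co_component)+
  have strong: "strong_partitive Mt D ?A" "strong_partitive Mt D ?B"
    using strong_partitive_co_component[OF sym_induced_edges] a_in_Mt b_in_Mt by blast+
  note bipartition = strong_bipartition[OF co_disconnected_bipartition[OF assms] _ _ strong]
  define f where "f X = (if X = ?A then a else b)" for X
  have "?A \<noteq> ?B"
    using co_disconnected_bipartition(2)[OF assms] \<open>b \<in> ?B\<close> by blast
  then have "f ` ?F = VS" and f_in: "\<And>X. X \<in> ?F \<Longrightarrow> f X \<in> X"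
    using \<open>a \<in> ?A\<close> \<open>b \<in> ?B\<close> VS_eq unfolding f_def by auto
  have "partitive Mt D X" if "X \<in> ?F" for X
    using that strong strong_partitiveD(1) by blast
  then have "graph_iso ?F (quotient_edges D ?F) (f ` ?F) (induced_edges D (f ` ?F))"
    using quotient_iso_choice[OF bipartition(1) _ f_in irrefl_induced_edges[OF irrefl_E]]
      \<open>a \<in> ?A\<close> \<open>b \<in> ?B\<close> by blast
  moreover have "VS \<subseteq> Mt"
    using a_in_Mt b_in_Mt VS_eq by blast
  ultimately have "graph_iso ?F (quotient_edges D ?F) VS (induced_edges E VS)"
    using \<open>f ` ?F = VS\<close> induced_edges_induced_edges[of VS Mt E] by simp
  then show ?thesis
    using bipartition \<open>a \<in> ?A\<close> \<open>b \<in> ?B\<close> by blast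
qed

end

locale rank_one_co_connected = rank_one_multiplex E VS a b
  for E :: "('a \<times> 'a) set" and VS a b +
  assumes co_connected: "co_component Mt D a = Mt"
begin

sublocale connected_coconnected_graph Mt D
proof
  show "sym D"
    by (rule sym_induced_edges)
  show "connected_graph Mt D"
    by (rule connected_Mt)
  show "connected_graph Mt (- D)"
    using sym_induced_edges co_connected by (rule connected_graph_complement_if_co_component)
  fix x
  assume "x \<in> Mt"
  then obtain y where "(x, y) \<in> M"
    using mem_Mt_iff by blast
  then have "y \<in> Mt" "y \<noteq> x"
    using M_ends_in_Mt M_edges no_loop by blast+
  moreover have "\<forall>Y. partitive Mt D Y \<and> x \<in> Y \<and> y \<in> Y \<longrightarrow> Y = Mt"
    using partitive_eq_Mt_if_M_edge \<open>(x, y) \<in> M\<close> by blast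
  ultimately show "\<exists>y\<in>Mt. y \<noteq> x \<and> (\<forall>Y. partitive Mt D Y \<and> x \<in> Y \<and> y \<in> Y \<longrightarrow> Y = Mt)"
    by blast
qed

lemma M_edge_across_max_modules:
  assumes "p \<in> Mt" "q \<in> Mt" "(p, q) \<in> E" "max_module p \<noteq> max_module q"
  shows "(p, q) \<in> M"
proof (rule ccontr)
  assume "(p, q) \<notin> M"
  then have "q \<in> non_M_edges\<^sup>* `` {p}"
    using assms(1-3) unfolding non_M_edges_def by blast
  moreover have "non_M_edges\<^sup>* `` {p} \<subseteq> max_module p"
    using partitive_subset_max_module[OF assms(1) partitive_non_M_component non_M_component_neq_Mt]
      assms(1) mem_max_module by blast
  ultimately show False
    using max_module_eq[OF assms(1)] assms(4) by blast
qed

lemma induced_edges_choice_subset_M: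
  assumes f: "\<And>X. X \<in> max_module ` Mt \<Longrightarrow> f X \<in> X"
  shows "induced_edges E (f ` max_module ` Mt) \<subseteq> M"
proof
  fix e
  assume "e \<in> induced_edges E (f ` max_module ` Mt)"
  then obtain x y where "x \<in> Mt" "y \<in> Mt" and e: "e = (f (max_module x), f (max_module y))" "e \<in> E"
    unfolding induced_edges_def by auto
  then have "f (max_module x) \<in> max_module x" "f (max_module y) \<in> max_module y"
    using f by blast+
  then have "f (max_module x) \<in> Mt" "f (max_module y) \<in> Mt"
    "max_module (f (max_module x)) = max_module x" "max_module (f (max_module y)) = max_module y"
    using max_module_subset max_module_eq \<open>x \<in> Mt\<close> \<open>y \<in> Mt\<close> by blast+
  moreover have "max_module x \<noteq> max_module y"
    using e no_loop by auto
  ultimately show "e \<in> M"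
    using M_edge_across_max_modules e by metis
qed

lemma quotient_prime_if_co_connected:
  "\<exists>F. partition_on Mt F \<and> F \<noteq> {Mt} \<and> (\<forall>X\<in>F. max_strong_partitive Mt D X) \<and>
    indecomposable F (quotient_edges D F) \<and>
    (\<exists>V'. V' \<subseteq> Mt \<and> induced_edges E V' \<subseteq> M \<and>
      graph_iso F (quotient_edges D F) V' (induced_edges E V'))"
proof -
  let ?F = "max_module ` Mt"
  have "\<forall>X\<in>?F. \<exists>x. x \<in> X"
    using mem_max_module by blast
  then obtain f where f: "\<And>X. X \<in> ?F \<Longrightarrow> f X \<in> X"
    using bchoice by metis
  have "partitive Mt D X" if "X \<in> ?F" for X
    using that partitive_max_module by blast
  then have "graph_iso ?F (quotient_edges D ?F) (f ` ?F) (induced_edges D (f ` ?F))"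
    using quotient_iso_choice[OF partition_on_max_modules _ f irrefl_induced_edges[OF irrefl_E]]
    by blast
  moreover have "f ` ?F \<subseteq> Mt"
    using f max_module_subset by blast
  ultimately have "\<exists>V'. V' \<subseteq> Mt \<and> induced_edges E V' \<subseteq> M \<and>
      graph_iso ?F (quotient_edges D ?F) V' (induced_edges E V')"
    using induced_edges_choice_subset_M[OF f] induced_edges_induced_edges[of "f ` ?F" Mt E] by auto
  moreover have "\<forall>X\<in>?F. max_strong_partitive Mt D X"
    using max_strong_partitive_max_module by blast
  ultimately show ?thesis
    using partition_on_max_modules max_modules_neq_single[OF a_in_Mt]
      indecomposable_max_module_quotient by blast
qed

end

context rank_one_multiplex
begin

lemma rank_one_quotient:
  "\<exists>F. partition_on Mt F \<and> F \<noteq> {Mt} \<and> (\<forall>X\<in>F. max_strong_partitive Mt D X) \<and>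
    (graph_iso F (quotient_edges D F) VS (induced_edges E VS) \<or>
     (indecomposable F (quotient_edges D F) \<and>
      (\<exists>V'. V' \<subseteq> Mt \<and> induced_edges E V' \<subseteq> M \<and>
        graph_iso F (quotient_edges D F) V' (induced_edges E V'))))"
proof (cases "co_component Mt D a = Mt")
  case True
  then interpret rank_one_co_connected E VS a b
    by unfold_locales
  show ?thesis
    using quotient_prime_if_co_connected by blast
next
  case False
  then show ?thesis
    using quotient_iso_simplex_if_co_disconnected by blast
qed

end

section \<open>Multiplexes of higher rank\<close>

locale higher_rank_multiplex = multiplex_graph E VS for E :: "('a \<times> 'a) set" and VS +
  assumes card_VS: "card VS \<ge> 3"
    and VS_complete: "\<And>u v. u \<in> VS \<Longrightarrow> v \<in> VS \<Longrightarrow> u \<noteq> v \<Longrightarrow> (u, v) \<in> E"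
    and VS_unforced: "\<And>u v u' v'. u \<in> VS \<Longrightarrow> v \<in> VS \<Longrightarrow> u' \<in> VS \<Longrightarrow> v' \<in> VS \<Longrightarrow>
      u \<noteq> v \<Longrightarrow> u' \<noteq> v' \<Longrightarrow> ((u, v), (u', v')) \<in> \<Gamma>\<^sup>+ \<Longrightarrow> {u, v} = {u', v'}"
begin

lemma third_vertex:
  obtains w where "w \<in> VS" "w \<noteq> u" "w \<noteq> v"
proof -
  have "card {u, v} \<le> 2"
    by (cases "u = v") simp_all
  then have "\<not> VS \<subseteq> {u, v}"
    using card_VS card_mono[of "{u, v}" VS] by auto
  then show ?thesis
    using that by blast
qed

lemma VS_edge_in_M: "u \<in> VS \<Longrightarrow> v \<in> VS \<Longrightarrow> u \<noteq> v \<Longrightarrow> (u, v) \<in> M"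
  unfolding multiplex_eq induced_edges_def using VS_complete Gamma_trancl_refl by blast

lemma VS_subset_Mt: "VS \<subseteq> Mt"
proof
  fix v
  assume "v \<in> VS"
  moreover obtain w where "w \<in> VS" "w \<noteq> v"
    using third_vertex by blast
  ultimately show "v \<in> Mt"
    using VS_edge_in_M M_ends_in_Mt by blast
qed

lemma VS_forced_cases:
  assumes "u \<in> VS" "v \<in> VS" "w \<in> VS" "u \<noteq> v" "w \<noteq> u" "w \<noteq> v"
  shows "((u, v), (u, w)) \<notin> \<Gamma>\<^sup>+" and "((u, v), (w, v)) \<notin> \<Gamma>\<^sup>+"
proof -
  have "{u, v} \<noteq> {u, w}" "{u, v} \<noteq> {w, v}"
    using assms(4-6) by (auto simp: doubleton_eq_iff)
  then show "((u, v), (u, w)) \<notin> \<Gamma>\<^sup>+" "((u, v), (w, v)) \<notin> \<Gamma>\<^sup>+"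
    using VS_unforced[of u v u w] VS_unforced[of u v w v] assms(1-6) by blast+
qed

lemma simplex_apex_forced:
  assumes "i \<in> VS" "j \<in> VS" "k \<in> VS" "i \<noteq> j" "k \<noteq> i" "k \<noteq> j"
    and "((i, j), (x, y)) \<in> \<Gamma>\<^sup>+"
  shows "(k, x) \<in> E \<and> (k, y) \<in> E \<and> ((k, i), (k, x)) \<in> \<Gamma>\<^sup>+ \<and> ((k, j), (k, y)) \<in> \<Gamma>\<^sup>+"
  using triangle_apex[OF VS_complete VS_complete VS_complete VS_forced_cases] assms by blast

definition vertex_class :: "'a \<Rightarrow> 'a set" where
  "vertex_class v = {x \<in> Mt. \<forall>w\<in>VS. w \<noteq> v \<longrightarrow> (x, w) \<in> E \<and> ((v, w), (x, w)) \<in> \<Gamma>\<^sup>+}"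

lemma vertex_class_subset: "vertex_class v \<subseteq> Mt"
  unfolding vertex_class_def by blast

lemma self_in_vertex_class: "v \<in> VS \<Longrightarrow> v \<in> vertex_class v"
  unfolding vertex_class_def using VS_subset_Mt VS_complete Gamma_trancl_refl by blast

lemma forced_fst_in_vertex_class:
  assumes ij: "i \<in> VS" "j \<in> VS" "i \<noteq> j" and forced: "((i, j), (x, y)) \<in> \<Gamma>\<^sup>+"
  shows "x \<in> vertex_class i"
proof -
  have "x \<in> Mt"
    using M_closed[OF VS_edge_in_M[OF ij] forced] M_ends_in_Mt by blast
  moreover have "(x, w) \<in> E \<and> ((i, w), (x, w)) \<in> \<Gamma>\<^sup>+" if w: "w \<in> VS" "w \<noteq> i" for w
  proof (cases "w = j")
    case False
    then show ?thesis
      using simplex_apex_forced[OF ij(1,2) w(1) ij(3) w(2) False forced] edge_sym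
        Gamma_trancl_swap by blast
  next
    case True
    obtain k where k: "k \<in> VS" "k \<noteq> i" "k \<noteq> j"
      using third_vertex by blast
    note apex = simplex_apex_forced[OF ij(1,2) k(1) ij(3) k(2,3) forced]
    have "((j, i), (y, x)) \<in> \<Gamma>\<^sup>+" "((j, k), (y, k)) \<in> \<Gamma>\<^sup>+" "((i, k), (x, k)) \<in> \<Gamma>\<^sup>+"
      using forced apex Gamma_trancl_swap by blast+
    moreover have "((j, k), (j, i)) \<notin> \<Gamma>\<^sup>+" "((j, k), (i, k)) \<notin> \<Gamma>\<^sup>+"
      using VS_forced_cases[of j k i] ij k by blast+
    ultimately have "((y, k), (y, x)) \<notin> \<Gamma>\<^sup>+" "((y, k), (x, k)) \<notin> \<Gamma>\<^sup>+"
      using Gamma_trancl_sym by (meson trancl_trans)+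
    moreover have "(x, y) \<in> E" "(x, k) \<in> E" "(y, k) \<in> E"
      using forced Gamma_trancl_edges apex edge_sym by blast+
    moreover have "((y, k), (j, k)) \<in> \<Gamma>\<^sup>+"
      using \<open>((j, k), (y, k)) \<in> \<Gamma>\<^sup>+\<close> by (rule Gamma_trancl_sym)
    ultimately have "((x, y), (x, j)) \<in> \<Gamma>\<^sup>+" "(x, j) \<in> E"
      using triangle_apex[of x y k j k] by blast+
    then show ?thesis
      using True trancl_trans[OF forced] by blast
  qed
  ultimately show ?thesis
    unfolding vertex_class_def by blast
qed

lemma Mt_covered_by_vertex_classes:
  assumes "x \<in> Mt"
  obtains v where "v \<in> VS" "x \<in> vertex_class v"
proof -
  obtain y where "(x, y) \<in> M"
    using assms mem_Mt_iff by blast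
  then obtain i j where "i \<in> VS" "j \<in> VS" "i \<noteq> j" "((i, j), (x, y)) \<in> \<Gamma>\<^sup>+"
    unfolding multiplex_eq induced_edges_def using no_loop by blast
  then show ?thesis
    using that forced_fst_in_vertex_class by blast
qed

lemma vertex_class_unique:
  assumes "x \<in> vertex_class u" "x \<in> vertex_class v" "u \<in> VS" "v \<in> VS"
  shows "u = v"
proof (rule ccontr)
  assume "u \<noteq> v"
  obtain w where w: "w \<in> VS" "w \<noteq> u" "w \<noteq> v"
    using third_vertex by blast
  then have "((u, w), (x, w)) \<in> \<Gamma>\<^sup>+" "((v, w), (x, w)) \<in> \<Gamma>\<^sup>+"
    using assms unfolding vertex_class_def by auto
  then have "((u, w), (v, w)) \<in> \<Gamma>\<^sup>+"
    by (meson Gamma_trancl_sym trancl_trans)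
  then show False
    using VS_forced_cases[of w u v] w assms(3,4) \<open>u \<noteq> v\<close> Gamma_trancl_swap by blast
qed

lemma vertex_class_cross_edge:
  assumes x: "x \<in> vertex_class i" and y: "y \<in> vertex_class j" and ij: "i \<in> VS" "j \<in> VS" "i \<noteq> j"
  shows "(x, y) \<in> E \<and> ((i, j), (x, y)) \<in> \<Gamma>\<^sup>+"
proof -
  obtain k where k: "k \<in> VS" "k \<noteq> i" "k \<noteq> j"
    using third_vertex by blast
  have xj: "(x, j) \<in> E" "((i, j), (x, j)) \<in> \<Gamma>\<^sup>+" and xk: "(x, k) \<in> E" "((i, k), (x, k)) \<in> \<Gamma>\<^sup>+"
    using x ij k unfolding vertex_class_def by auto
  have yk: "((j, k), (y, k)) \<in> \<Gamma>\<^sup>+"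
    using y ij k unfolding vertex_class_def by auto
  have "((j, i), (j, x)) \<in> \<Gamma>\<^sup>+"
    using xj(2) Gamma_trancl_swap by blast
  moreover have "((j, k), (j, i)) \<notin> \<Gamma>\<^sup>+" "((j, k), (i, k)) \<notin> \<Gamma>\<^sup>+"
    using VS_forced_cases[of j k i] ij k by blast+
  ultimately have "((j, k), (j, x)) \<notin> \<Gamma>\<^sup>+" "((j, k), (x, k)) \<notin> \<Gamma>\<^sup>+"
    using xk(2) Gamma_trancl_sym by (meson trancl_trans)+
  then have "(x, y) \<in> E \<and> ((x, j), (x, y)) \<in> \<Gamma>\<^sup>+"
    using triangle_apex[of x j k y k] xj xk VS_complete ij k yk by blast
  then show ?thesis
    using trancl_trans[OF xj(2)] by blast
qed

lemma partitive_vertex_class_Un: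
  assumes "u \<in> VS" "w \<in> VS"
  shows "partitive Mt D (vertex_class u \<union> vertex_class w)"
proof (rule partitiveI)
  let ?Y = "vertex_class u \<union> vertex_class w"
  show "?Y \<subseteq> Mt"
    using vertex_class_subset by blast
  fix p q c
  assume "p \<in> ?Y" "q \<in> ?Y" and c: "c \<in> Mt" "c \<notin> ?Y"
  obtain s where s: "s \<in> VS" "c \<in> vertex_class s"
    using c(1) by (rule Mt_covered_by_vertex_classes)
  have "(z, c) \<in> D \<and> (c, z) \<in> D" if "z \<in> ?Y" for z
  proof -
    obtain t where "t \<in> {u, w}" "z \<in> vertex_class t"
      using \<open>z \<in> ?Y\<close> by blast
    moreover have "t \<noteq> s"
      using calculation s(2) c(2) by blast
    ultimately have "(z, c) \<in> E"
      using vertex_class_cross_edge[of z t c s] s assms by blast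
    moreover have "z \<in> Mt"
      using \<open>z \<in> ?Y\<close> vertex_class_subset by blast
    ultimately show ?thesis
      using c(1) D_iff edge_sym by blast
  qed
  then show "((p, c) \<in> D \<longleftrightarrow> (q, c) \<in> D) \<and> ((c, p) \<in> D \<longleftrightarrow> (c, q) \<in> D)"
    using \<open>p \<in> ?Y\<close> \<open>q \<in> ?Y\<close> by blast
qed

text \<open>If \<open>Y\<close> meets \<open>vertex_class v\<close> in \<open>y\<close> and contains a vertex \<open>z\<close> of another class, then
  \<open>yz\<close> is an edge of \<open>M\<close> forcing \<open>xz\<close> for every \<open>x\<close> in \<open>vertex_class v\<close>.\<close>

lemma strong_partitive_vertex_class:
  assumes v: "v \<in> VS"
  shows "strong_partitive Mt D (vertex_class v)"
proof (rule strong_partitiveI)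
  show "partitive Mt D (vertex_class v)"
    using partitive_vertex_class_Un[OF v v] by simp
  fix Y
  assume Y: "partitive Mt D Y" and "vertex_class v \<inter> Y \<noteq> {}"
  show "vertex_class v \<subseteq> Y \<or> Y \<subseteq> vertex_class v"
  proof (rule ccontr)
    assume "\<not> ?thesis"
    then obtain x y z where x: "x \<in> vertex_class v" "x \<notin> Y" and y: "y \<in> vertex_class v" "y \<in> Y"
      and z: "z \<in> Y" "z \<notin> vertex_class v"
      using \<open>vertex_class v \<inter> Y \<noteq> {}\<close> by blast
    obtain u where u: "u \<in> VS" "z \<in> vertex_class u"
      using z(1) partitive_subset[OF Y] Mt_covered_by_vertex_classes by blast
    then have "u \<noteq> v"
      using z(2) by blast
    then have "((v, u), (y, z)) \<in> \<Gamma>\<^sup>+" "((v, u), (x, z)) \<in> \<Gamma>\<^sup>+"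
      using vertex_class_cross_edge[OF _ u(2) v u(1)] x(1) y(1) by blast+
    then have "(y, z) \<in> M" "((y, z), (x, z)) \<in> \<Gamma>\<^sup>+"
      using M_closed[OF VS_edge_in_M[OF v u(1)]] \<open>u \<noteq> v\<close> Gamma_trancl_sym
      by (blast, meson trancl_trans)
    then show False
      using partitive_contains_forced_edges[OF Y _ y(2) z(1)] x(2) by blast
  qed
qed

lemma vertex_class_neq_Mt:
  assumes "v \<in> VS"
  shows "vertex_class v \<noteq> Mt"
proof -
  obtain u where "u \<in> VS" "u \<noteq> v"
    using third_vertex by blast
  then have "u \<in> Mt" "u \<notin> vertex_class v"
    using VS_subset_Mt vertex_class_unique self_in_vertex_class assms by blast+
  then show ?thesis
    by blast
qed

text \<open>For a vertex \<open>t\<close> of a third class \<open>w\<close>, the partitive set \<open>vertex_class u \<union> vertex_class w\<close>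
  meets \<open>Z\<close> but misses \<open>v\<close>, so strongness of \<open>Z\<close> forces it into \<open>Z\<close>.\<close>

lemma strong_partitive_meeting_two_classes:
  assumes Z: "strong_partitive Mt D Z" and "vertex_class v \<subseteq> Z" "z \<in> Z" "z \<in> vertex_class u"
    and uv: "u \<in> VS" "v \<in> VS" "u \<noteq> v"
  shows "Z = Mt"
proof
  show "Z \<subseteq> Mt"
    using Z strong_partitiveD(1) partitive_subset by blast
  show "Mt \<subseteq> Z"
  proof
    fix t
    assume "t \<in> Mt"
    then obtain s where s: "s \<in> VS" "t \<in> vertex_class s"
      by (rule Mt_covered_by_vertex_classes)
    obtain w where w: "w \<in> VS" "w \<noteq> u" "w \<noteq> v"
      and t: "t \<in> vertex_class v \<union> vertex_class u \<union> vertex_class w"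
    proof (cases "s \<in> {u, v}")
      case True
      obtain w where "w \<in> VS" "w \<noteq> u" "w \<noteq> v"
        by (rule third_vertex)
      with True s(2) show ?thesis
        using that by blast
    next
      case False
      with s show ?thesis
        using that[of s] by blast
    qed
    let ?Y = "vertex_class u \<union> vertex_class w"
    have "Z \<subseteq> ?Y \<or> ?Y \<subseteq> Z"
      using strong_partitiveD(2)[OF Z partitive_vertex_class_Un[OF uv(1) w(1)]] assms(3,4) by blast
    moreover have "v \<in> Z" "v \<notin> ?Y"
      using vertex_class_unique self_in_vertex_class assms(2) uv w by blast+
    ultimately show "t \<in> Z"
      using t assms(2) by blast
  qed
qed

lemma max_strong_partitive_vertex_class:
  assumes v: "v \<in> VS"
  shows "max_strong_partitive Mt D (vertex_class v)"
  unfolding max_strong_partitive_def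
proof (intro conjI allI impI)
  show "strong_partitive Mt D (vertex_class v)"
    using v by (rule strong_partitive_vertex_class)
  show "vertex_class v \<noteq> Mt"
    using v by (rule vertex_class_neq_Mt)
  fix Z
  assume Z: "strong_partitive Mt D Z \<and> Z \<noteq> Mt \<and> vertex_class v \<subseteq> Z"
  show "Z = vertex_class v"
  proof (rule ccontr)
    assume "Z \<noteq> vertex_class v"
    then obtain z where "z \<in> Z" "z \<notin> vertex_class v"
      using Z by blast
    moreover obtain u where "u \<in> VS" "z \<in> vertex_class u"
      using \<open>z \<in> Z\<close> Z strong_partitiveD(1) partitive_subset Mt_covered_by_vertex_classes by blast
    ultimately show False
      using strong_partitive_meeting_two_classes[of Z v z u] Z v by blast
  qed
qed

lemma partition_on_vertex_classes: "partition_on Mt (vertex_class ` VS)"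
  unfolding partition_on_def disjoint_def
proof (intro conjI ballI impI)
  show "\<Union> (vertex_class ` VS) = Mt"
    using vertex_class_subset Mt_covered_by_vertex_classes by blast
  show "{} \<notin> vertex_class ` VS"
    using self_in_vertex_class by blast
  fix X Y
  assume "X \<in> vertex_class ` VS" "Y \<in> vertex_class ` VS" "X \<noteq> Y"
  then show "X \<inter> Y = {}"
    using vertex_class_unique by blast
qed

lemma higher_rank_quotient:
  "\<exists>F. partition_on Mt F \<and> F \<noteq> {Mt} \<and> (\<forall>X\<in>F. max_strong_partitive Mt D X) \<and>
    graph_iso F (quotient_edges D F) VS (induced_edges E VS)"
proof -
  let ?F = "vertex_class ` VS"
  have "?F \<noteq> {Mt}"
  proof
    assume "?F = {Mt}"
    obtain v where "v \<in> VS"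
      using third_vertex by blast
    with \<open>?F = {Mt}\<close> have "vertex_class v = Mt"
      by blast
    with \<open>v \<in> VS\<close> show False
      using vertex_class_neq_Mt by blast
  qed
  have "inj_on vertex_class VS"
    using vertex_class_unique self_in_vertex_class by (metis inj_onI)
  then have "inv_into VS vertex_class ` ?F = VS"
    by (simp add: inv_into_image_cancel)
  moreover have inv_in: "inv_into VS vertex_class X \<in> X" if "X \<in> ?F" for X
    using that \<open>inj_on vertex_class VS\<close> self_in_vertex_class by auto
  moreover have partitive: "partitive Mt D X" if "X \<in> ?F" for X
    using that strong_partitive_vertex_class strong_partitiveD(1) by blast
  ultimately have "graph_iso ?F (quotient_edges D ?F) VS (induced_edges D VS)"
    using quotient_iso_choice[OF partition_on_vertex_classes partitive inv_in
        irrefl_induced_edges[OF irrefl_E]] by simp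
  then have "graph_iso ?F (quotient_edges D ?F) VS (induced_edges E VS)"
    using induced_edges_induced_edges[OF VS_subset_Mt] by simp
  moreover have "\<forall>X\<in>?F. max_strong_partitive Mt D X"
    using max_strong_partitive_vertex_class by blast
  ultimately show ?thesis
    using partition_on_vertex_classes \<open>?F \<noteq> {Mt}\<close> by blast
qed

end

theorem theorem4p4:
  fixes V :: "'a set" and E :: "('a \<times> 'a) set" and VS :: "'a set"
  assumes "undirected V E"
    and "simplex V E VS"
  defines "M \<equiv> multiplex E VS"
  defines "Mt \<equiv> Field M"
  shows "\<exists>F. partition_on Mt F \<and> F \<noteq> {Mt} \<and>
            (\<forall>X\<in>F. max_strong_partitive Mt (induced_edges E Mt) X) \<and>
            (simplex_rank VS = 1 \<longrightarrow>
               graph_iso F (quotient_edges (induced_edges E Mt) F) VS (induced_edges E VS) \<or>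
               (indecomposable F (quotient_edges (induced_edges E Mt) F) \<and>
                (\<exists>V'. V' \<subseteq> Mt \<and> induced_edges E V' \<subseteq> M \<and>
                   graph_iso F (quotient_edges (induced_edges E Mt) F) V' (induced_edges E V')))) \<and>
            (simplex_rank VS \<ge> 2 \<longrightarrow>
               graph_iso F (quotient_edges (induced_edges E Mt) F) VS (induced_edges E VS))"
proof -
  interpret simple_graph E
    using assms(1) unfolding undirected_def by unfold_locales blast+
  have card: "card VS \<ge> 2"
    and complete: "\<And>u v. u \<in> VS \<Longrightarrow> v \<in> VS \<Longrightarrow> u \<noteq> v \<Longrightarrow> (u, v) \<in> E"
    using assms(2) unfolding simplex_def by blast+
  show ?thesis
  proof (cases "card VS = 2")
    case True
    then obtain a b where "VS = {a, b}" "a \<noteq> b"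
      by (meson card_2_iff)
    then interpret rank_one_multiplex E VS a b
      using complete by unfold_locales blast+
    have "simplex_rank VS = 1"
      using True by (simp add: simplex_rank_def)
    then show ?thesis
      unfolding M_def Mt_def using rank_one_quotient by auto
  next
    case False
    interpret higher_rank_multiplex E VS
      using card False complete simplex_edges_unforced[OF assms(2)] by unfold_locales auto
    have "simplex_rank VS \<ge> 2"
      using card False by (simp add: simplex_rank_def)
    then show ?thesis
      unfolding M_def Mt_def using higher_rank_quotient by auto
  qed
qed

end
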